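(* Let $(S_i,\mathscr T_i)_{i\in I}$ be a non-empty family of stable topological spaces, and equip $\prod_{i\in I}S_i$ with the stable product topology. Then $\prod_{i\in I}S_i$ is stable compact if and only if $S_i$ is stable compact for every $i\in I$.
   Context: $L^0$ is the ring of real measurable functions on a probability space modulo a.e. equality. An $L^0$-module $E$ is stable if for every countable measurable partition $(A_k)$ of $\Omega$ and $(x_k)\subset E$ there is a unique $x=\sum_k1_{A_k}x_k$ with $1_{A_k}x=1_{A_k}x_k$. A nonempty subset is stable if closed under such concatenations; for stable sets $Y_k$, $\sum_k1_{A_k}Y_k=\{\sum_k1_{A_k}y_k:y_k\in Y_k\}$, and a nonempty collection of stable sets is stable if closed under this operation. A stable topological space is a stable subset $S$ of a stable $L^0$-module with a topology having a base which is a stable collection of stable sets. A filter is stable if it has a filter base which is a stable collection of stable sets; $S$ is stable compact if every stable filter on $S$ has a cluster point in $S$. If $S_i\subset E_i$, then $\prod_iS_i$ is a stable subset of the product module $\prod_iE_i$ (concatenation coordinatewise). If $\mathscr B_i$ is a base of $\mathscr T_i$ which is a stable collection of stable sets, the stable product topology on $\prod_iS_i$ is the topology with base consisting of all sets $\sum_k1_{A_k}\prod_iU^k_i$, where $(A_k)$ is a countable measurable partition and for each $k$, $U^k_i\in\mathscr B_i$ for finitely many $i$ and $U^k_i=S_i$ for all other $i$. *)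

theory Defs
  imports "HOL-Probability.Probability"
begin

text \<open>Elements of L0 are represented by
Borel measurable functions; an L0-module is a module over the ring of measurable
functions on which a.e.-equal functions act identically (so it is exactly a module
over L0 = measurable functions modulo a.e. equality).\<close>

record ('w, 'e) L0module =
  mcarr :: "'e set"
  madd  :: "'e \<Rightarrow> 'e \<Rightarrow> 'e"
  mzero :: "'e"
  msmul :: "('w \<Rightarrow> real) \<Rightarrow> 'e \<Rightarrow> 'e"

definition L0_module :: "'w measure \<Rightarrow> ('w, 'e) L0module \<Rightarrow> bool" where
  "L0_module M E \<longleftrightarrow>
     mzero E \<in> mcarr E \<and>
     (\<forall>x\<in>mcarr E. \<forall>y\<in>mcarr E. madd E x y \<in> mcarr E) \<and>
     (\<forall>x\<in>mcarr E. \<forall>y\<in>mcarr E. \<forall>z\<in>mcarr E. madd E (madd E x y) z = madd E x (madd E y z)) \<and>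
     (\<forall>x\<in>mcarr E. \<forall>y\<in>mcarr E. madd E x y = madd E y x) \<and>
     (\<forall>x\<in>mcarr E. madd E (mzero E) x = x) \<and>
     (\<forall>x\<in>mcarr E. \<exists>y\<in>mcarr E. madd E x y = mzero E) \<and>
     (\<forall>f\<in>borel_measurable M. \<forall>x\<in>mcarr E. msmul E f x \<in> mcarr E) \<and>
     (\<forall>f\<in>borel_measurable M. \<forall>g\<in>borel_measurable M. \<forall>x\<in>mcarr E.
        msmul E (\<lambda>w. f w * g w) x = msmul E f (msmul E g x)) \<and>
     (\<forall>f\<in>borel_measurable M. \<forall>g\<in>borel_measurable M. \<forall>x\<in>mcarr E.
        msmul E (\<lambda>w. f w + g w) x = madd E (msmul E f x) (msmul E g x)) \<and>
     (\<forall>f\<in>borel_measurable M. \<forall>x\<in>mcarr E. \<forall>y\<in>mcarr E.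
        msmul E f (madd E x y) = madd E (msmul E f x) (msmul E f y)) \<and>
     (\<forall>x\<in>mcarr E. msmul E (\<lambda>w. 1) x = x) \<and>
     (\<forall>f\<in>borel_measurable M. \<forall>g\<in>borel_measurable M. \<forall>x\<in>mcarr E.
        (AE w in M. f w = g w) \<longrightarrow> msmul E f x = msmul E g x)"

text \<open>Countable measurable partitions of the sample space (finite ones via empty sets).\<close>
definition meas_partition :: "'w measure \<Rightarrow> (nat \<Rightarrow> 'w set) \<Rightarrow> bool" where
  "meas_partition M A \<longleftrightarrow> (\<forall>k. A k \<in> sets M) \<and> disjoint_family A \<and> (\<Union>k. A k) = space M"

definition stable_module :: "'w measure \<Rightarrow> ('w, 'e) L0module \<Rightarrow> bool" where
  "stable_module M E \<longleftrightarrow> L0_module M E \<and>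
     (\<forall>A x. meas_partition M A \<and> (\<forall>k. x k \<in> mcarr E) \<longrightarrow>
        (\<exists>!y. y \<in> mcarr E \<and>
           (\<forall>k. msmul E (indicator (A k)) y = msmul E (indicator (A k)) (x k))))"

text \<open>The concatenation \<Sum>k 1_{A_k} x_k.\<close>
definition concat :: "'w measure \<Rightarrow> ('w, 'e) L0module \<Rightarrow> (nat \<Rightarrow> 'w set) \<Rightarrow> (nat \<Rightarrow> 'e) \<Rightarrow> 'e" where
  "concat M E A x = (THE y. y \<in> mcarr E \<and>
       (\<forall>k. msmul E (indicator (A k)) y = msmul E (indicator (A k)) (x k)))"

definition stable_set :: "'w measure \<Rightarrow> ('w, 'e) L0module \<Rightarrow> 'e set \<Rightarrow> bool" where
  "stable_set M E S \<longleftrightarrow> S \<noteq> {} \<and> S \<subseteq> mcarr E \<and>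
     (\<forall>A x. meas_partition M A \<and> (\<forall>k. x k \<in> S) \<longrightarrow> concat M E A x \<in> S)"

definition concat_sets :: "'w measure \<Rightarrow> ('w, 'e) L0module \<Rightarrow> (nat \<Rightarrow> 'w set) \<Rightarrow> (nat \<Rightarrow> 'e set) \<Rightarrow> 'e set" where
  "concat_sets M E A Y = {concat M E A y | y. \<forall>k. y k \<in> Y k}"

definition stable_collection :: "'w measure \<Rightarrow> ('w, 'e) L0module \<Rightarrow> 'e set set \<Rightarrow> bool" where
  "stable_collection M E \<C> \<longleftrightarrow> \<C> \<noteq> {} \<and> (\<forall>Y\<in>\<C>. stable_set M E Y) \<and>
     (\<forall>A Y. meas_partition M A \<and> (\<forall>k. Y k \<in> \<C>) \<longrightarrow> concat_sets M E A Y \<in> \<C>)"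

definition stable_base :: "'w measure \<Rightarrow> ('w, 'e) L0module \<Rightarrow> 'e topology \<Rightarrow> 'e set set \<Rightarrow> bool" where
  "stable_base M E T B \<longleftrightarrow> (\<forall>U\<in>B. openin T U) \<and>
     (\<forall>U. openin T U \<longrightarrow> (\<exists>\<U>\<subseteq>B. \<Union>\<U> = U)) \<and> stable_collection M E B"

definition stable_top_space :: "'w measure \<Rightarrow> ('w, 'e) L0module \<Rightarrow> 'e set \<Rightarrow> 'e topology \<Rightarrow> bool" where
  "stable_top_space M E S T \<longleftrightarrow> stable_set M E S \<and> topspace T = S \<and> (\<exists>B. stable_base M E T B)"

definition filter_on :: "'e set \<Rightarrow> 'e set set \<Rightarrow> bool" where
  "filter_on S \<F> \<longleftrightarrow> \<F> \<noteq> {} \<and> {} \<notin> \<F> \<and> (\<forall>F\<in>\<F>. F \<subseteq> S) \<and>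
     (\<forall>F\<in>\<F>. \<forall>G\<in>\<F>. F \<inter> G \<in> \<F>) \<and> (\<forall>F\<in>\<F>. \<forall>G. F \<subseteq> G \<and> G \<subseteq> S \<longrightarrow> G \<in> \<F>)"

definition stable_filter :: "'w measure \<Rightarrow> ('w, 'e) L0module \<Rightarrow> 'e set \<Rightarrow> 'e set set \<Rightarrow> bool" where
  "stable_filter M E S \<F> \<longleftrightarrow> filter_on S \<F> \<and>
     (\<exists>\<B>. \<B> \<subseteq> \<F> \<and> (\<forall>F\<in>\<F>. \<exists>B\<in>\<B>. B \<subseteq> F) \<and> stable_collection M E \<B>)"

definition cluster_point :: "('e set \<Rightarrow> bool) \<Rightarrow> 'e set set \<Rightarrow> 'e \<Rightarrow> bool" where
  "cluster_point opn \<F> x \<longleftrightarrow> (\<forall>U. opn U \<and> x \<in> U \<longrightarrow> (\<forall>F\<in>\<F>. U \<inter> F \<noteq> {}))"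

definition stable_compact :: "'w measure \<Rightarrow> ('w, 'e) L0module \<Rightarrow> 'e set \<Rightarrow> ('e set \<Rightarrow> bool) \<Rightarrow> bool" where
  "stable_compact M E S opn \<longleftrightarrow>
     (\<forall>\<F>. stable_filter M E S \<F> \<longrightarrow> (\<exists>x\<in>S. cluster_point opn \<F> x))"

definition prod_module :: "'i set \<Rightarrow> ('i \<Rightarrow> ('w, 'e) L0module) \<Rightarrow> ('w, 'i \<Rightarrow> 'e) L0module" where
  "prod_module I E = \<lparr> mcarr = (\<Pi>\<^sub>E i\<in>I. mcarr (E i)),
      madd = (\<lambda>x y. restrict (\<lambda>i. madd (E i) (x i) (y i)) I),
      mzero = restrict (\<lambda>i. mzero (E i)) I,
      msmul = (\<lambda>f x. restrict (\<lambda>i. msmul (E i) f (x i)) I) \<rparr>"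

definition prod_base :: "'w measure \<Rightarrow> 'i set \<Rightarrow> ('i \<Rightarrow> ('w, 'e) L0module) \<Rightarrow> ('i \<Rightarrow> 'e set)
    \<Rightarrow> ('i \<Rightarrow> 'e set set) \<Rightarrow> ('i \<Rightarrow> 'e) set set" where
  "prod_base M I E S B = {concat_sets M (prod_module I E) A (\<lambda>k. \<Pi>\<^sub>E i\<in>I. U k i) | A U.
      meas_partition M A \<and>
      (\<forall>k. finite {i\<in>I. U k i \<noteq> S i} \<and> (\<forall>i\<in>I. U k i \<in> B i \<or> U k i = S i))}"

definition prod_open :: "'w measure \<Rightarrow> 'i set \<Rightarrow> ('i \<Rightarrow> ('w, 'e) L0module) \<Rightarrow> ('i \<Rightarrow> 'e set)
    \<Rightarrow> ('i \<Rightarrow> 'e set set) \<Rightarrow> ('i \<Rightarrow> 'e) set \<Rightarrow> bool" where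
  "prod_open M I E S B U \<longleftrightarrow> (\<exists>\<U>\<subseteq>prod_base M I E S B. \<Union>\<U> = U)"

end

theory Submission
  imports Defs
begin

text \<open>Cylinders over a stable filter on a factor generate a stable filter on the product, and a
  cluster point of it projects to a cluster point of the given filter; this is the easy direction.

  Conversely, by Zorn's lemma every stable filter on the product lies in a maximal one, \<open>\<U>\<close>
  (the concatenations of members of a chain of stable filters generate a stable filter). The
  projections of \<open>\<U>\<close> are stable filters, so they have cluster points \<open>x\<^sub>i\<close>. Maximality
  means that \<open>\<U>\<close> contains every stable set meeting all its members, in particular every cylinder
  over a basic neighbourhood of \<open>x\<^sub>i\<close>, hence every finite box around \<open>x\<close>. A basic open set
  \<open>\<Sum>\<^sub>k 1\<^bsub>A\<^sub>k\<^esub> \<Prod>\<^sub>i U\<^sub>k\<^sup>i\<close> containing \<open>x\<close> contains the concatenation of the boxes obtained by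
  gluing each \<open>U\<^sub>k\<^sup>i\<close> on \<open>A\<^sub>k\<close> with a neighbourhood of \<open>x\<^sub>i\<close> off \<open>A\<^sub>k\<close>; this concatenation lies
  in \<open>\<U>\<close>, so \<open>x\<close> is a cluster point of \<open>\<U>\<close> and of the original filter.\<close>

section \<open>Concatenation\<close>

text \<open>The only module axioms the argument uses; unlike those of \<open>stable_module\<close> they are
  evidently inherited by product modules.\<close>

definition concat_module :: "'w measure \<Rightarrow> ('w, 'e) L0module \<Rightarrow> bool" where
  "concat_module M E \<longleftrightarrow>
     (\<forall>f\<in>borel_measurable M. \<forall>x\<in>mcarr E. msmul E f x \<in> mcarr E) \<and>
     (\<forall>f\<in>borel_measurable M. \<forall>g\<in>borel_measurable M. \<forall>x\<in>mcarr E.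
        msmul E (\<lambda>w. f w * g w) x = msmul E f (msmul E g x)) \<and>
     (\<forall>A x. meas_partition M A \<and> (\<forall>k. x k \<in> mcarr E) \<longrightarrow>
        (\<exists>!y. y \<in> mcarr E \<and> (\<forall>k. msmul E (indicator (A k)) y = msmul E (indicator (A k)) (x k))))"

lemma stable_module_imp_concat_module: "stable_module M E \<Longrightarrow> concat_module M E"
  unfolding stable_module_def L0_module_def concat_module_def by (intro conjI; elim conjE; assumption)

lemma meas_partition_sets: "meas_partition M A \<Longrightarrow> A k \<in> sets M"
  unfolding meas_partition_def by blast

lemma smul_indicator_in_carrier:
  "concat_module M E \<Longrightarrow> X \<in> sets M \<Longrightarrow> x \<in> mcarr E \<Longrightarrow> msmul E (indicator X) x \<in> mcarr E"
  unfolding concat_module_def by (auto intro: borel_measurable_indicator)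

lemma smul_indicator_smul_indicator:
  assumes "concat_module M E" "X \<in> sets M" "Y \<in> sets M" "x \<in> mcarr E"
  shows "msmul E (indicator X) (msmul E (indicator Y) x) = msmul E (indicator (X \<inter> Y)) x"
proof -
  have "msmul E (\<lambda>w. indicator X w * indicator Y w) x = msmul E (indicator X) (msmul E (indicator Y) x)"
    using assms unfolding concat_module_def by (simp add: borel_measurable_indicator)
  moreover have "(\<lambda>w. indicator X w * indicator Y w :: real) = indicator (X \<inter> Y)"
    by (auto simp: indicator_def)
  ultimately show ?thesis by simp
qed

lemma smul_indicator_commute:
  assumes "concat_module M E" "X \<in> sets M" "Y \<in> sets M" "x \<in> mcarr E"
  shows "msmul E (indicator X) (msmul E (indicator Y) x) = msmul E (indicator Y) (msmul E (indicator X) x)"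
  using smul_indicator_smul_indicator[OF assms] smul_indicator_smul_indicator[OF assms(1,3,2,4)]
  by (simp add: Int_commute)

lemma
  assumes "concat_module M E" "meas_partition M A" "\<And>k. x k \<in> mcarr E"
  shows concat_in_carrier: "concat M E A x \<in> mcarr E"
    and smul_indicator_concat:
      "msmul E (indicator (A k)) (concat M E A x) = msmul E (indicator (A k)) (x k)"
proof -
  have "\<exists>!y. y \<in> mcarr E \<and> (\<forall>k. msmul E (indicator (A k)) y = msmul E (indicator (A k)) (x k))"
    using assms unfolding concat_module_def by blast
  from theI'[OF this] show "concat M E A x \<in> mcarr E"
    "msmul E (indicator (A k)) (concat M E A x) = msmul E (indicator (A k)) (x k)"
    unfolding concat_def by auto
qed

lemma concat_unique:
  assumes "concat_module M E" "meas_partition M A" "\<And>k. x k \<in> mcarr E" "y \<in> mcarr E"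
    "\<And>k. msmul E (indicator (A k)) y = msmul E (indicator (A k)) (x k)"
  shows "concat M E A x = y"
proof -
  have "\<exists>!y. y \<in> mcarr E \<and> (\<forall>k. msmul E (indicator (A k)) y = msmul E (indicator (A k)) (x k))"
    using assms unfolding concat_module_def by blast
  then show ?thesis
    unfolding concat_def by (rule the1_equality) (use assms in auto)
qed

lemma concat_const:
  "concat_module M E \<Longrightarrow> meas_partition M A \<Longrightarrow> y \<in> mcarr E \<Longrightarrow> concat M E A (\<lambda>k. y) = y"
  by (rule concat_unique) auto

lemma concat_cong:
  assumes E: "concat_module M E" and A: "meas_partition M A"
    and "\<And>k. x k \<in> mcarr E" "\<And>k. y k \<in> mcarr E"
    and "\<And>k. msmul E (indicator (A k)) (x k) = msmul E (indicator (A k)) (y k)"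
  shows "concat M E A x = concat M E A y"
  using assms by (intro concat_unique) (auto simp: concat_in_carrier smul_indicator_concat)

lemma eq_if_smul_indicator_eq:
  assumes "concat_module M E" "meas_partition M A" "u \<in> mcarr E" "v \<in> mcarr E"
    "\<And>k. msmul E (indicator (A k)) u = msmul E (indicator (A k)) v"
  shows "u = v"
  using concat_cong[of M E A "\<lambda>k. u" "\<lambda>k. v"] assms by (simp add: concat_const)

lemma concat_concat_swap:
  assumes E: "concat_module M E" and A: "meas_partition M A" and B: "meas_partition M B"
    and y: "\<And>j k. y j k \<in> mcarr E"
  shows "concat M E B (\<lambda>j. concat M E A (y j)) = concat M E A (\<lambda>k. concat M E B (\<lambda>j. y j k))"
proof (rule sym, rule concat_unique[OF E A])
  let ?l = "concat M E B (\<lambda>j. concat M E A (y j))" and ?r = "\<lambda>k. concat M E B (\<lambda>j. y j k)"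
  have cA: "\<And>j. concat M E A (y j) \<in> mcarr E" and cB: "\<And>k. ?r k \<in> mcarr E"
    using E A B y by (auto intro: concat_in_carrier)
  show l: "?l \<in> mcarr E" using concat_in_carrier[OF E B] cA .
  show "?r k \<in> mcarr E" for k by (rule cB)
  fix k
  have Ak: "A k \<in> sets M" and Bj: "B j \<in> sets M" for j
    using A B by (auto intro: meas_partition_sets)
  show "msmul E (indicator (A k)) ?l = msmul E (indicator (A k)) (?r k)"
  proof (rule eq_if_smul_indicator_eq[OF E B])
    show "msmul E (indicator (A k)) ?l \<in> mcarr E" "msmul E (indicator (A k)) (?r k) \<in> mcarr E"
      using l cB Ak E by (auto intro: smul_indicator_in_carrier)
    fix j
    have "msmul E (indicator (B j)) (msmul E (indicator (A k)) ?l)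
        = msmul E (indicator (A k)) (msmul E (indicator (B j)) (concat M E A (y j)))"
      using smul_indicator_commute[OF E Bj Ak l] smul_indicator_concat[OF E B cA] by simp
    also have "\<dots> = msmul E (indicator (B j)) (msmul E (indicator (A k)) (y j k))"
      using smul_indicator_commute[OF E Ak Bj cA] smul_indicator_concat[OF E A y] by simp
    also have "\<dots> = msmul E (indicator (A k)) (msmul E (indicator (B j)) (y j k))"
      using smul_indicator_commute[OF E Bj Ak y] .
    also have "\<dots> = msmul E (indicator (A k)) (msmul E (indicator (B j)) (?r k))"
      using smul_indicator_concat[OF E B, of "\<lambda>j. y j k"] y by simp
    also have "\<dots> = msmul E (indicator (B j)) (msmul E (indicator (A k)) (?r k))"
      using smul_indicator_commute[OF E Ak Bj cB] .
    finally show "msmul E (indicator (B j)) (msmul E (indicator (A k)) ?l) =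
          msmul E (indicator (B j)) (msmul E (indicator (A k)) (?r k))" .
  qed
qed

definition partition2 :: "'w measure \<Rightarrow> 'w set \<Rightarrow> nat \<Rightarrow> 'w set" where
  "partition2 M X n = (if n = 0 then X else if n = 1 then space M - X else {})"

lemma partition2_0 [simp]: "partition2 M X 0 = X"
  by (simp add: partition2_def)

lemma meas_partition_partition2: "X \<in> sets M \<Longrightarrow> meas_partition M (partition2 M X)"
  unfolding meas_partition_def partition2_def disjoint_family_on_def
  using sets.sets_into_space by (auto split: if_splits)

text \<open>\<open>glue M E X u v\<close> is the element \<open>1\<^sub>X u + 1\<^bsub>\<Omega> - X\<^esub> v\<close>.\<close>

definition glue :: "'w measure \<Rightarrow> ('w, 'e) L0module \<Rightarrow> 'w set \<Rightarrow> 'e \<Rightarrow> 'e \<Rightarrow> 'e" where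
  "glue M E X u v = concat M E (partition2 M X) (\<lambda>n. if n = 0 then u else v)"

definition glue_sets :: "'w measure \<Rightarrow> ('w, 'e) L0module \<Rightarrow> 'w set \<Rightarrow> 'e set \<Rightarrow> 'e set \<Rightarrow> 'e set" where
  "glue_sets M E X Y Z = concat_sets M E (partition2 M X) (\<lambda>n. if n = 0 then Y else Z)"

context
  fixes M :: "'w measure" and E :: "('w, 'e) L0module" and X :: "'w set"
  assumes E: "concat_module M E" and X: "X \<in> sets M"
begin

lemma smul_indicator_glue:
  "u \<in> mcarr E \<Longrightarrow> v \<in> mcarr E \<Longrightarrow> msmul E (indicator X) (glue M E X u v) = msmul E (indicator X) u"
  unfolding glue_def using smul_indicator_concat[OF E meas_partition_partition2[OF X], of _ 0] by simp

lemma glue_cong: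
  assumes "u \<in> mcarr E" "u' \<in> mcarr E" "v \<in> mcarr E"
    and "msmul E (indicator X) u = msmul E (indicator X) u'"
  shows "glue M E X u v = glue M E X u' v"
  unfolding glue_def using assms
  by (intro concat_cong[OF E meas_partition_partition2[OF X]]) auto

lemma glue_eq_right:
  assumes "u \<in> mcarr E" "v \<in> mcarr E" "msmul E (indicator X) u = msmul E (indicator X) v"
  shows "glue M E X u v = v"
proof -
  have "glue M E X v v = v"
    unfolding glue_def using concat_const[OF E meas_partition_partition2[OF X] assms(2)] by simp
  then show ?thesis using glue_cong assms by metis
qed

lemma glue_in_stable_set:
  "stable_set M E V \<Longrightarrow> u \<in> V \<Longrightarrow> v \<in> V \<Longrightarrow> glue M E X u v \<in> V"
  unfolding glue_def stable_set_def using meas_partition_partition2[OF X] by simp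

lemma glue_in_glue_sets: "u \<in> Y \<Longrightarrow> v \<in> Z \<Longrightarrow> glue M E X u v \<in> glue_sets M E X Y Z"
  unfolding glue_def glue_sets_def concat_sets_def by auto

lemma mem_glue_sets_if_local:
  assumes "u \<in> Y" "v \<in> Z" "u \<in> mcarr E" "v \<in> mcarr E"
    and "msmul E (indicator X) u = msmul E (indicator X) v"
  shows "v \<in> glue_sets M E X Y Z"
  using glue_in_glue_sets[OF assms(1,2)] glue_eq_right[OF assms(3-5)] by simp

lemma glue_sets_obtain:
  assumes "w \<in> glue_sets M E X Y Z" "Y \<subseteq> mcarr E" "Z \<subseteq> mcarr E"
  obtains u where "u \<in> Y" "msmul E (indicator X) w = msmul E (indicator X) u"
proof -
  obtain y where w: "w = concat M E (partition2 M X) y" and y: "\<And>n. y n \<in> (if n = 0 then Y else Z)"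
    using assms(1) unfolding glue_sets_def concat_sets_def by blast
  have "y n \<in> mcarr E" for n using y[of n] assms(2,3) by (auto split: if_splits)
  then have "msmul E (indicator X) w = msmul E (indicator X) (y 0)"
    unfolding w using smul_indicator_concat[OF E meas_partition_partition2[OF X], of y 0] by simp
  moreover have "y 0 \<in> Y" using y[of 0] by simp
  ultimately show ?thesis using that by blast
qed

end

definition refine_partition :: "(nat \<Rightarrow> 'w set) \<Rightarrow> (nat \<Rightarrow> nat \<Rightarrow> 'w set) \<Rightarrow> nat \<Rightarrow> 'w set" where
  "refine_partition A A' n = (case prod_decode n of (k, k') \<Rightarrow> A k \<inter> A' k k')"

lemma refine_partition_prod_encode [simp]:
  "refine_partition A A' (prod_encode (k, k')) = A k \<inter> A' k k'"
  by (simp add: refine_partition_def)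

lemma prod_encode_cases: obtains k k' where "n = prod_encode (k, k')"
  by (metis prod_decode_inverse surj_pair)

lemma meas_partition_refine_partition:
  assumes A: "meas_partition M A" and A': "\<And>k. meas_partition M (A' k)"
  shows "meas_partition M (refine_partition A A')"
  unfolding meas_partition_def
proof (intro conjI allI)
  fix n
  obtain k k' where n: "n = prod_encode (k, k')" by (rule prod_encode_cases)
  show "refine_partition A A' n \<in> sets M"
    unfolding n using meas_partition_sets[OF A] meas_partition_sets[OF A'] by simp
next
  have dis: "disjoint_family A" "\<And>k. disjoint_family (A' k)"
    using A A' unfolding meas_partition_def by blast+
  show "disjoint_family (refine_partition A A')"
    unfolding disjoint_family_on_def
  proof (intro ballI impI)
    fix m n :: nat assume "m \<noteq> n"
    moreover obtain k k' l l' where mn: "m = prod_encode (k, k')" "n = prod_encode (l, l')"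
      by (metis prod_encode_cases)
    ultimately have "k \<noteq> l \<or> k = l \<and> k' \<noteq> l'" by auto
    then have "A k \<inter> A l = {} \<or> A' k k' \<inter> A' l l' = {}"
      using disjoint_family_onD[OF dis(1)] disjoint_family_onD[OF dis(2)[of k]] by blast
    then show "refine_partition A A' m \<inter> refine_partition A A' n = {}"
      unfolding mn by auto
  qed
next
  have "w \<in> (\<Union>n. refine_partition A A' n)" if "w \<in> space M" for w
  proof -
    obtain k where "w \<in> A k" using A \<open>w \<in> space M\<close> unfolding meas_partition_def by auto
    moreover obtain k' where "w \<in> A' k k'" using A'[of k] \<open>w \<in> space M\<close> unfolding meas_partition_def by auto
    ultimately have "w \<in> refine_partition A A' (prod_encode (k, k'))" by simp
    then show ?thesis by blast
  qed
  moreover have "refine_partition A A' n \<subseteq> space M" for n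
    using A unfolding meas_partition_def by (auto simp: refine_partition_def split: prod.split)
  ultimately show "(\<Union>n. refine_partition A A' n) = space M" by blast
qed

lemma concat_refine_partition:
  assumes E: "concat_module M E" and A: "meas_partition M A" and A': "\<And>k. meas_partition M (A' k)"
    and y: "\<And>k k'. y k k' \<in> mcarr E"
  shows "concat M E (refine_partition A A') (\<lambda>n. case_prod y (prod_decode n))
       = concat M E A (\<lambda>k. concat M E (A' k) (y k))"
proof (rule concat_unique[OF E meas_partition_refine_partition[OF A A']])
  have c: "concat M E (A' k) (y k) \<in> mcarr E" for k by (rule concat_in_carrier[OF E A' y])
  show "case_prod y (prod_decode n) \<in> mcarr E" for n using y by (simp split: prod.split)
  show l: "concat M E A (\<lambda>k. concat M E (A' k) (y k)) \<in> mcarr E" by (rule concat_in_carrier[OF E A c])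
  fix n
  obtain k k' where n: "n = prod_encode (k, k')" by (rule prod_encode_cases)
  have Ak: "A k \<in> sets M" and Akk: "A' k k' \<in> sets M"
    using meas_partition_sets[OF A] meas_partition_sets[OF A'] by auto
  have "msmul E (indicator (A k \<inter> A' k k')) (concat M E A (\<lambda>k. concat M E (A' k) (y k)))
      = msmul E (indicator (A' k k')) (msmul E (indicator (A k)) (concat M E (A' k) (y k)))"
    using smul_indicator_smul_indicator[OF E Akk Ak l] smul_indicator_concat[OF E A c]
    by (simp add: Int_commute)
  also have "\<dots> = msmul E (indicator (A k)) (msmul E (indicator (A' k k')) (y k k'))"
    using smul_indicator_commute[OF E Akk Ak c] smul_indicator_concat[OF E A' y] by simp
  also have "\<dots> = msmul E (indicator (A k \<inter> A' k k')) (y k k')"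
    using smul_indicator_smul_indicator[OF E Ak Akk y] .
  finally show "msmul E (indicator (refine_partition A A' n)) (concat M E A (\<lambda>k. concat M E (A' k) (y k)))
      = msmul E (indicator (refine_partition A A' n)) (case_prod y (prod_decode n))"
    unfolding n by simp
qed

section \<open>Stable sets\<close>

lemma concat_setsI: "(\<And>k. y k \<in> Y k) \<Longrightarrow> concat M E A y \<in> concat_sets M E A Y"
  unfolding concat_sets_def by blast

lemma concat_setsE:
  assumes "x \<in> concat_sets M E A Y"
  obtains y where "x = concat M E A y" "\<And>k. y k \<in> Y k"
  using assms unfolding concat_sets_def by blast

lemma stable_setI:
  "X \<noteq> {} \<Longrightarrow> X \<subseteq> mcarr E \<Longrightarrow> (\<And>A x. meas_partition M A \<Longrightarrow> (\<And>k. x k \<in> X) \<Longrightarrow> concat M E A x \<in> X)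
   \<Longrightarrow> stable_set M E X"
  unfolding stable_set_def by simp

lemma
  assumes "stable_set M E X"
  shows stable_set_nonempty: "X \<noteq> {}"
    and stable_set_subset_carrier: "X \<subseteq> mcarr E"
    and stable_set_concat: "meas_partition M A \<Longrightarrow> (\<And>k. x k \<in> X) \<Longrightarrow> concat M E A x \<in> X"
  using assms unfolding stable_set_def by simp_all

lemma stable_set_Int:
  "stable_set M E X \<Longrightarrow> stable_set M E Y \<Longrightarrow> X \<inter> Y \<noteq> {} \<Longrightarrow> stable_set M E (X \<inter> Y)"
  by (rule stable_setI) (auto dest: stable_set_subset_carrier intro: stable_set_concat)

lemma concat_sets_mono: "(\<And>k. Y k \<subseteq> Z k) \<Longrightarrow> concat_sets M E A Y \<subseteq> concat_sets M E A Z"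
  by (auto elim!: concat_setsE intro!: concat_setsI)

lemma concat_sets_subset:
  "stable_set M E S \<Longrightarrow> meas_partition M A \<Longrightarrow> (\<And>k. Y k \<subseteq> S) \<Longrightarrow> concat_sets M E A Y \<subseteq> S"
  by (auto elim!: concat_setsE intro!: stable_set_concat)

lemma concat_sets_const:
  assumes E: "concat_module M E" and A: "meas_partition M A" and Y: "stable_set M E Y"
  shows "concat_sets M E A (\<lambda>k. Y) = Y"
proof
  show "concat_sets M E A (\<lambda>k. Y) \<subseteq> Y" by (rule concat_sets_subset[OF Y A]) simp
  show "Y \<subseteq> concat_sets M E A (\<lambda>k. Y)"
  proof
    fix y assume "y \<in> Y"
    then have "concat M E A (\<lambda>k. y) \<in> concat_sets M E A (\<lambda>k. Y)" by (rule concat_setsI)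
    then show "y \<in> concat_sets M E A (\<lambda>k. Y)"
      using concat_const[OF E A, of y] stable_set_subset_carrier[OF Y] \<open>y \<in> Y\<close> by auto
  qed
qed

lemma stable_set_concat_sets:
  assumes E: "concat_module M E" and A: "meas_partition M A" and Y: "\<And>k. stable_set M E (Y k)"
  shows "stable_set M E (concat_sets M E A Y)"
proof (rule stable_setI)
  have carr: "Y k \<subseteq> mcarr E" for k using Y by (rule stable_set_subset_carrier)
  have "\<forall>k. \<exists>y. y \<in> Y k" using Y stable_set_nonempty by blast
  then obtain y where "\<forall>k. y k \<in> Y k" by (rule choice[THEN exE])
  then show "concat_sets M E A Y \<noteq> {}" by (blast intro: concat_setsI)
  show "concat_sets M E A Y \<subseteq> mcarr E"
  proof
    fix w assume "w \<in> concat_sets M E A Y"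
    then obtain y where "w = concat M E A y" "\<And>k. y k \<in> Y k" by (elim concat_setsE) blast
    then show "w \<in> mcarr E" using concat_in_carrier[OF E A, of y] carr by blast
  qed
  fix B x assume B: "meas_partition M B" and x: "\<And>j::nat. x j \<in> concat_sets M E A Y"
  have "\<forall>j. \<exists>y. x j = concat M E A y \<and> (\<forall>k. y k \<in> Y k)"
    using x unfolding concat_sets_def by blast
  then obtain yy where "\<forall>j. x j = concat M E A (yy j) \<and> (\<forall>k. yy j k \<in> Y k)"
    by (rule choice[THEN exE])
  then have yy: "\<And>j. x j = concat M E A (yy j)" "\<And>j k. yy j k \<in> Y k" by blast+
  have "x = (\<lambda>j. concat M E A (yy j))" using yy(1) by (rule ext)
  moreover have "yy j k \<in> mcarr E" for j k using yy(2) carr by blast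
  ultimately have "concat M E B x = concat M E A (\<lambda>k. concat M E B (\<lambda>j. yy j k))"
    using concat_concat_swap[OF E A B, of yy] by simp
  moreover have "concat M E B (\<lambda>j. yy j k) \<in> Y k" for k
    by (rule stable_set_concat[OF Y B]) (rule yy(2))
  ultimately show "concat M E B x \<in> concat_sets M E A Y" by (simp add: concat_setsI)
qed

lemma concat_sets_refine_partitionE:
  assumes "w \<in> concat_sets M E (refine_partition A A') (\<lambda>n. case_prod Y (prod_decode n))"
  obtains y where "w = concat M E (refine_partition A A') (\<lambda>n. case_prod y (prod_decode n))"
    "\<And>k k'. y k k' \<in> Y k k'"
proof -
  obtain z where w: "w = concat M E (refine_partition A A') z" and z: "\<And>n. z n \<in> case_prod Y (prod_decode n)"
    using assms by (elim concat_setsE) blast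
  have "z = (\<lambda>n. case_prod (\<lambda>k k'. z (prod_encode (k, k'))) (prod_decode n))"
    by (simp add: fun_eq_iff split: prod.split)
  moreover have "z (prod_encode (k, k')) \<in> Y k k'" for k k' using z[of "prod_encode (k, k')"] by simp
  ultimately show ?thesis using that w by metis
qed

lemma concat_sets_refine_partition_subset:
  assumes E: "concat_module M E" and A: "meas_partition M A" and A': "\<And>k. meas_partition M (A' k)"
    and Y: "\<And>k k'. Y k k' \<subseteq> mcarr E"
  shows "concat_sets M E (refine_partition A A') (\<lambda>n. case_prod Y (prod_decode n))
     \<subseteq> concat_sets M E A (\<lambda>k. concat_sets M E (A' k) (Y k))"
proof
  fix w assume "w \<in> concat_sets M E (refine_partition A A') (\<lambda>n. case_prod Y (prod_decode n))"
  then obtain y where w: "w = concat M E (refine_partition A A') (\<lambda>n. case_prod y (prod_decode n))"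
    and y: "\<And>k k'. y k k' \<in> Y k k'"
    by (elim concat_sets_refine_partitionE) blast
  have "y k k' \<in> mcarr E" for k k' using y Y by blast
  then have "w = concat M E A (\<lambda>k. concat M E (A' k) (y k))"
    unfolding w by (rule concat_refine_partition[OF E A A'])
  then show "w \<in> concat_sets M E A (\<lambda>k. concat_sets M E (A' k) (Y k))"
    using y by (simp add: concat_setsI)
qed

lemma concat_sets_refine_partition_Int_subset:
  assumes E: "concat_module M E" and A: "meas_partition M A" and A': "meas_partition M A'"
    and Y: "\<And>k. stable_set M E (Y k)" and Y': "\<And>k. stable_set M E (Y' k)"
  shows "concat_sets M E (refine_partition A (\<lambda>_. A')) (\<lambda>n. case_prod (\<lambda>k k'. Y k \<inter> Y' k') (prod_decode n))
     \<subseteq> concat_sets M E A Y \<inter> concat_sets M E A' Y'"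
proof
  fix w assume "w \<in> concat_sets M E (refine_partition A (\<lambda>_. A'))
      (\<lambda>n. case_prod (\<lambda>k k'. Y k \<inter> Y' k') (prod_decode n))"
  then obtain y where w: "w = concat M E (refine_partition A (\<lambda>_. A')) (\<lambda>n. case_prod y (prod_decode n))"
    and y: "\<And>k k'. y k k' \<in> Y k \<inter> Y' k'"
    by (elim concat_sets_refine_partitionE) blast
  have yc: "y k k' \<in> mcarr E" for k k' using y Y stable_set_subset_carrier by blast
  have "w = concat M E A (\<lambda>k. concat M E A' (y k))"
    unfolding w using concat_refine_partition[OF E A A' yc] .
  moreover have "concat M E A' (y k) \<in> Y k" for k
    by (rule stable_set_concat[OF Y A']) (use y in blast)
  moreover have "w = concat M E A' (\<lambda>k'. concat M E A (\<lambda>k. y k k'))"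
    using calculation(1) concat_concat_swap[OF E A' A, of y] yc by simp
  moreover have "concat M E A (\<lambda>k. y k k') \<in> Y' k'" for k'
    by (rule stable_set_concat[OF Y' A]) (use y in blast)
  ultimately show "w \<in> concat_sets M E A Y \<inter> concat_sets M E A' Y'"
    by (metis IntI concat_setsI)
qed

lemma concat_sets_subset_if_local:
  assumes E: "concat_module M E" and A: "meas_partition M A"
    and Y: "\<And>k. Y k \<subseteq> mcarr E" and Z: "\<And>k. Z k \<subseteq> mcarr E"
    and local: "\<And>k y. y \<in> Y k \<Longrightarrow> \<exists>z\<in>Z k. msmul E (indicator (A k)) z = msmul E (indicator (A k)) y"
  shows "concat_sets M E A Y \<subseteq> concat_sets M E A Z"
proof
  fix w assume "w \<in> concat_sets M E A Y"
  then obtain y where w: "w = concat M E A y" and y: "\<And>k. y k \<in> Y k" by (elim concat_setsE) blast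
  have "\<forall>k. \<exists>z. z \<in> Z k \<and> msmul E (indicator (A k)) z = msmul E (indicator (A k)) (y k)"
    using local[OF y] by blast
  then obtain z where "\<forall>k. z k \<in> Z k \<and> msmul E (indicator (A k)) (z k) = msmul E (indicator (A k)) (y k)"
    by (rule choice[THEN exE])
  then have z: "\<And>k. z k \<in> Z k" "\<And>k. msmul E (indicator (A k)) (z k) = msmul E (indicator (A k)) (y k)"
    by blast+
  have "y k \<in> mcarr E" "z k \<in> mcarr E" for k using y z(1) Y Z by blast+
  then have "w = concat M E A z"
    unfolding w using z(2) by (intro concat_cong[OF E A]) auto
  then show "w \<in> concat_sets M E A Z" using z(1) by (simp add: concat_setsI)
qed

lemma Int_concat_sets_subset:
  assumes E: "concat_module M E" and A: "meas_partition M A" and V: "stable_set M E V"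
    and H: "\<And>k. stable_set M E (H k)" and meet: "\<And>k. V \<inter> H k \<noteq> {}"
  shows "V \<inter> concat_sets M E A H \<subseteq> concat_sets M E A (\<lambda>k. V \<inter> H k)"
proof
  fix x assume "x \<in> V \<inter> concat_sets M E A H"
  then have xV: "x \<in> V" and "x \<in> concat_sets M E A H" by auto
  then obtain h where xh: "x = concat M E A h" and h: "\<And>k. h k \<in> H k" by (elim concat_setsE) blast
  have Vc: "V \<subseteq> mcarr E" and Hc: "\<And>k. H k \<subseteq> mcarr E" using V H by (auto dest: stable_set_subset_carrier)
  have xc: "x \<in> mcarr E" using xV Vc by blast
  have hc: "h k \<in> mcarr E" for k using h Hc by blast
  have Ak: "A k \<in> sets M" for k using A by (rule meas_partition_sets)
  have "concat M E A (\<lambda>k. x) \<in> concat_sets M E A (\<lambda>k. {x})" by (rule concat_setsI) simp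
  then have "x \<in> concat_sets M E A (\<lambda>k. {x})" by (simp add: concat_const[OF E A xc])
  also have "\<dots> \<subseteq> concat_sets M E A (\<lambda>k. V \<inter> H k)"
  proof (rule concat_sets_subset_if_local[OF E A])
    show "{x} \<subseteq> mcarr E" "V \<inter> H k \<subseteq> mcarr E" for k using xc Vc by auto
    fix k y assume "y \<in> {x}"
    then have y: "y = x" by simp
    obtain v where v: "v \<in> V" "v \<in> H k" using meet[of k] by blast
    have vc: "v \<in> mcarr E" using v Vc by blast
    have hx: "msmul E (indicator (A k)) (h k) = msmul E (indicator (A k)) x"
      unfolding xh using smul_indicator_concat[OF E A hc] by simp
    \<comment> \<open>\<open>1\<^bsub>A k\<^esub> h k + 1\<^bsub>\<Omega> - A k\<^esub> v\<close> lies in \<open>H k\<close>, and it equals \<open>1\<^bsub>A k\<^esub> x + 1\<^bsub>\<Omega> - A k\<^esub> v\<close>, which lies in \<open>V\<close>\<close>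
    have "glue M E (A k) (h k) v = glue M E (A k) x v"
      using glue_cong[OF E Ak hc[of k] xc vc hx] .
    moreover have "glue M E (A k) x v \<in> V" using glue_in_stable_set[OF E Ak V xV v(1)] .
    moreover have "glue M E (A k) (h k) v \<in> H k" using glue_in_stable_set[OF E Ak H h v(2)] .
    moreover have "msmul E (indicator (A k)) (glue M E (A k) (h k) v) = msmul E (indicator (A k)) x"
      using smul_indicator_glue[OF E Ak hc[of k] vc] hx by simp
    ultimately show "\<exists>z\<in>V \<inter> H k. msmul E (indicator (A k)) z = msmul E (indicator (A k)) y"
      unfolding y by auto
  qed
  finally show "x \<in> concat_sets M E A (\<lambda>k. V \<inter> H k)" .
qed

section \<open>Stable filters\<close>

lemma filter_onD:
  assumes "filter_on S \<F>"
  shows "\<F> \<noteq> {}" "{} \<notin> \<F>" "F \<in> \<F> \<Longrightarrow> F \<subseteq> S"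
    "F \<in> \<F> \<Longrightarrow> F' \<in> \<F> \<Longrightarrow> F \<inter> F' \<in> \<F>"
    "F \<in> \<F> \<Longrightarrow> F \<subseteq> F' \<Longrightarrow> F' \<subseteq> S \<Longrightarrow> F' \<in> \<F>"
  using assms unfolding filter_on_def by blast+

lemma filter_on_top:
  assumes "filter_on S \<F>"
  shows "S \<in> \<F>"
proof -
  obtain F where "F \<in> \<F>" using filter_onD(1)[OF assms] by blast
  then show ?thesis using filter_onD(3,5)[OF assms] by blast
qed

lemma filter_on_Int_finite:
  assumes \<F>: "filter_on S \<F>" and J: "finite J" and X: "\<And>j. j \<in> J \<Longrightarrow> X j \<in> \<F>"
  shows "S \<inter> (\<Inter>j\<in>J. X j) \<in> \<F>"
  using J X
proof (induction J rule: finite_induct)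
  case empty
  then show ?case using filter_on_top[OF \<F>] by simp
next
  case (insert j J)
  have "S \<inter> (\<Inter>j\<in>J. X j) \<in> \<F>" "X j \<in> \<F>" using insert by blast+
  then have "X j \<inter> (S \<inter> (\<Inter>j\<in>J. X j)) \<in> \<F>" using filter_onD(4)[OF \<F>] by blast
  then show ?case by (simp add: Int_left_commute)
qed

lemma
  assumes "stable_filter M E S \<F>"
  shows stable_filter_filter_on: "filter_on S \<F>"
    and stable_filter_stable_subset: "F \<in> \<F> \<Longrightarrow> \<exists>H\<in>\<F>. H \<subseteq> F \<and> stable_set M E H"
  using assms unfolding stable_filter_def stable_collection_def by blast+

lemma stable_filter_concat_sets:
  assumes \<F>: "stable_filter M E S \<F>" and S: "stable_set M E S" and A: "meas_partition M A"
    and Y: "\<And>k. Y k \<in> \<F>"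
  shows "concat_sets M E A Y \<in> \<F>"
proof -
  obtain \<B> where \<B>: "\<B> \<subseteq> \<F>" "\<forall>F\<in>\<F>. \<exists>B\<in>\<B>. B \<subseteq> F" "stable_collection M E \<B>"
    using \<F> unfolding stable_filter_def by blast
  have "\<forall>k. \<exists>b. b \<in> \<B> \<and> b \<subseteq> Y k" using \<B>(2) Y by blast
  then obtain b where b: "\<forall>k. b k \<in> \<B> \<and> b k \<subseteq> Y k" by (rule choice[THEN exE])
  then have "concat_sets M E A b \<in> \<B>"
    using \<B>(3) A unfolding stable_collection_def by blast
  moreover have "concat_sets M E A b \<subseteq> concat_sets M E A Y" using b by (intro concat_sets_mono) blast
  moreover have "concat_sets M E A Y \<subseteq> S"
    using concat_sets_subset[OF S A] filter_onD(3)[OF stable_filter_filter_on[OF \<F>] Y] by blast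
  ultimately show ?thesis using \<B>(1) filter_onD(5)[OF stable_filter_filter_on[OF \<F>]] by blast
qed

definition upclosure :: "'a set \<Rightarrow> 'a set set \<Rightarrow> 'a set set" where
  "upclosure S \<G> = {F. F \<subseteq> S \<and> (\<exists>H\<in>\<G>. H \<subseteq> F)}"

lemma upclosureI: "F \<subseteq> S \<Longrightarrow> H \<in> \<G> \<Longrightarrow> H \<subseteq> F \<Longrightarrow> F \<in> upclosure S \<G>"
  unfolding upclosure_def by blast

lemma upclosure_subset: "(\<And>H. H \<in> \<G> \<Longrightarrow> H \<subseteq> S) \<Longrightarrow> \<G> \<subseteq> upclosure S \<G>"
  unfolding upclosure_def by blast

lemma filter_on_upclosure:
  assumes "\<G> \<noteq> {}" "{} \<notin> \<G>" "\<And>H. H \<in> \<G> \<Longrightarrow> H \<subseteq> S"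
    and "\<And>H H'. H \<in> \<G> \<Longrightarrow> H' \<in> \<G> \<Longrightarrow> \<exists>H''\<in>\<G>. H'' \<subseteq> H \<inter> H'"
  shows "filter_on S (upclosure S \<G>)"
  unfolding filter_on_def upclosure_def
proof (intro conjI ballI allI impI)
  show "{F. F \<subseteq> S \<and> (\<exists>H\<in>\<G>. H \<subseteq> F)} \<noteq> {}" using assms(1,3) by blast
  show "{} \<notin> {F. F \<subseteq> S \<and> (\<exists>H\<in>\<G>. H \<subseteq> F)}" using assms(2) by auto
  fix F F' assume "F \<in> {F. F \<subseteq> S \<and> (\<exists>H\<in>\<G>. H \<subseteq> F)}" "F' \<in> {F. F \<subseteq> S \<and> (\<exists>H\<in>\<G>. H \<subseteq> F)}"
  then obtain H H' where "H \<in> \<G>" "H' \<in> \<G>" "H \<subseteq> F" "H' \<subseteq> F'" "F \<subseteq> S" by blast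
  moreover from this(1,2) obtain H'' where "H'' \<in> \<G>" "H'' \<subseteq> H \<inter> H'" using assms(4) by blast
  ultimately show "F \<inter> F' \<in> {F. F \<subseteq> S \<and> (\<exists>H\<in>\<G>. H \<subseteq> F)}" by blast
qed auto

lemma stable_filter_upclosure:
  assumes E: "concat_module M E" and S: "stable_set M E S" and ne: "\<G> \<noteq> {}"
    and \<G>: "\<And>H. H \<in> \<G> \<Longrightarrow> stable_set M E H \<and> H \<subseteq> S"
    and directed: "\<And>H H'. H \<in> \<G> \<Longrightarrow> H' \<in> \<G> \<Longrightarrow> \<exists>H''\<in>\<G>. H'' \<subseteq> H \<inter> H'"
    and concat: "\<And>A Y. meas_partition M A \<Longrightarrow> (\<And>k. Y k \<in> \<G>) \<Longrightarrow> \<exists>H\<in>\<G>. H \<subseteq> concat_sets M E A Y"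
  shows "stable_filter M E S (upclosure S \<G>)"
proof -
  let ?\<B> = "{H \<in> upclosure S \<G>. stable_set M E H}"
  have filter: "filter_on S (upclosure S \<G>)"
    using \<G> stable_set_nonempty by (intro filter_on_upclosure[OF ne _ _ directed]) blast+
  have \<G>_\<B>: "\<G> \<subseteq> ?\<B>" using upclosure_subset[of \<G> S] \<G> by blast
  have "stable_collection M E ?\<B>"
    unfolding stable_collection_def
  proof (intro conjI allI impI ballI)
    show "?\<B> \<noteq> {}" using ne \<G>_\<B> by blast
    fix A Y assume AY: "meas_partition M A \<and> (\<forall>k::nat. Y k \<in> ?\<B>)"
    then have A: "meas_partition M A" and Y: "\<And>k. Y k \<in> ?\<B>" by blast+
    have "\<forall>k. \<exists>H. H \<in> \<G> \<and> H \<subseteq> Y k" using Y unfolding upclosure_def by blast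
    then obtain H where "\<forall>k. H k \<in> \<G> \<and> H k \<subseteq> Y k" by (rule choice[THEN exE])
    then have H: "\<And>k. H k \<in> \<G>" "\<And>k. H k \<subseteq> Y k" by blast+
    obtain H' where "H' \<in> \<G>" "H' \<subseteq> concat_sets M E A H" using concat[OF A, of H] H(1) by blast
    moreover have "concat_sets M E A H \<subseteq> concat_sets M E A Y" using H(2) by (rule concat_sets_mono)
    moreover have "concat_sets M E A Y \<subseteq> S"
      using Y by (intro concat_sets_subset[OF S A]) (auto simp: upclosure_def)
    moreover have "stable_set M E (concat_sets M E A Y)"
      using Y by (intro stable_set_concat_sets[OF E A]) blast
    ultimately show "concat_sets M E A Y \<in> ?\<B>" by (blast intro: upclosureI)
  qed blast
  moreover have "\<exists>B\<in>?\<B>. B \<subseteq> F" if F: "F \<in> upclosure S \<G>" for F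
  proof -
    obtain H where "H \<in> \<G>" "H \<subseteq> F" using F unfolding upclosure_def by blast
    then show ?thesis using \<G>_\<B> by blast
  qed
  ultimately show ?thesis
    unfolding stable_filter_def using filter by (intro conjI exI[of _ ?\<B>] ballI) auto
qed

definition concat_closure :: "'w measure \<Rightarrow> ('w, 'e) L0module \<Rightarrow> 'e set set \<Rightarrow> 'e set set" where
  "concat_closure M E \<S> = {concat_sets M E A Y | A Y. meas_partition M A \<and> (\<forall>k. Y k \<in> \<S>)}"

lemma concat_closureI: "meas_partition M A \<Longrightarrow> (\<And>k. Y k \<in> \<S>) \<Longrightarrow> concat_sets M E A Y \<in> concat_closure M E \<S>"
  unfolding concat_closure_def by blast

lemma concat_closureE:
  assumes "H \<in> concat_closure M E \<S>"
  obtains A Y where "H = concat_sets M E A Y" "meas_partition M A" "\<And>k. Y k \<in> \<S>"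
  using assms unfolding concat_closure_def by blast

lemma stable_set_in_concat_closure:
  assumes E: "concat_module M E" and H: "H \<in> \<S>" "stable_set M E H"
  shows "H \<in> concat_closure M E \<S>"
proof -
  have A: "meas_partition M (partition2 M (space M))" by (simp add: meas_partition_partition2)
  have "concat_sets M E (partition2 M (space M)) (\<lambda>k. H) \<in> concat_closure M E \<S>"
    using H(1) by (intro concat_closureI[OF A])
  then show ?thesis using concat_sets_const[OF E A H(2)] by simp
qed

lemma stable_filter_upclosure_concat_closure:
  assumes E: "concat_module M E" and S: "stable_set M E S" and ne: "\<S> \<noteq> {}"
    and \<S>: "\<And>H. H \<in> \<S> \<Longrightarrow> stable_set M E H \<and> H \<subseteq> S"
    and Int: "\<And>H H'. H \<in> \<S> \<Longrightarrow> H' \<in> \<S> \<Longrightarrow> H \<inter> H' \<in> \<S>"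
  shows "stable_filter M E S (upclosure S (concat_closure M E \<S>))"
proof (rule stable_filter_upclosure[OF E S])
  show "concat_closure M E \<S> \<noteq> {}" using ne \<S> stable_set_in_concat_closure[OF E] by blast
next
  fix H assume "H \<in> concat_closure M E \<S>"
  then obtain A Y where H: "H = concat_sets M E A Y" and A: "meas_partition M A" and Y: "\<And>k. Y k \<in> \<S>"
    by (elim concat_closureE) blast
  have "stable_set M E (concat_sets M E A Y)" using Y \<S> by (intro stable_set_concat_sets[OF E A]) blast
  moreover have "concat_sets M E A Y \<subseteq> S" using Y \<S> by (intro concat_sets_subset[OF S A]) blast
  ultimately show "stable_set M E H \<and> H \<subseteq> S" unfolding H by blast
next
  fix H H' assume "H \<in> concat_closure M E \<S>" "H' \<in> concat_closure M E \<S>"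
  then obtain A Y A' Y' where H: "H = concat_sets M E A Y" "meas_partition M A" "\<And>k. Y k \<in> \<S>"
    and H': "H' = concat_sets M E A' Y'" "meas_partition M A'" "\<And>k. Y' k \<in> \<S>"
    by (elim concat_closureE) blast
  let ?Y = "\<lambda>n. case_prod (\<lambda>k k'. Y k \<inter> Y' k') (prod_decode n)"
  have "concat_sets M E (refine_partition A (\<lambda>_. A')) ?Y \<in> concat_closure M E \<S>"
    using H(2,3) H'(2,3) Int
    by (intro concat_closureI meas_partition_refine_partition) (auto split: prod.split)
  moreover have "concat_sets M E (refine_partition A (\<lambda>_. A')) ?Y \<subseteq> H \<inter> H'"
    unfolding H(1) H'(1) using H(3) H'(3) \<S>
    by (intro concat_sets_refine_partition_Int_subset[OF E H(2) H'(2)]) blast+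
  ultimately show "\<exists>H''\<in>concat_closure M E \<S>. H'' \<subseteq> H \<inter> H'" by blast
next
  fix A and \<Y> :: "nat \<Rightarrow> _"
  assume A: "meas_partition M A" and \<Y>: "\<And>k. \<Y> k \<in> concat_closure M E \<S>"
  have "\<forall>k. \<exists>B Y. \<Y> k = concat_sets M E B Y \<and> meas_partition M B \<and> (\<forall>k'. Y k' \<in> \<S>)"
    using \<Y> unfolding concat_closure_def by blast
  then obtain B Y where "\<forall>k. \<Y> k = concat_sets M E (B k) (Y k) \<and> meas_partition M (B k) \<and> (\<forall>k'. Y k k' \<in> \<S>)"
    by metis
  then have \<Y>_eq: "\<Y> = (\<lambda>k. concat_sets M E (B k) (Y k))" and B: "\<And>k. meas_partition M (B k)"
    and Y: "\<And>k k'. Y k k' \<in> \<S>" by auto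
  let ?Y = "\<lambda>n. case_prod Y (prod_decode n)"
  have "concat_sets M E (refine_partition A B) ?Y \<in> concat_closure M E \<S>"
    using A B Y by (intro concat_closureI meas_partition_refine_partition) (auto split: prod.split)
  moreover have "concat_sets M E (refine_partition A B) ?Y \<subseteq> concat_sets M E A \<Y>"
    unfolding \<Y>_eq using Y \<S> stable_set_subset_carrier
    by (intro concat_sets_refine_partition_subset[OF E A B]) blast
  ultimately show "\<exists>H\<in>concat_closure M E \<S>. H \<subseteq> concat_sets M E A \<Y>" by blast
qed

lemma stable_filter_chain_upper_bound:
  assumes E: "concat_module M E" and S: "stable_set M E S" and ne: "\<C> \<noteq> {}"
    and \<C>: "\<And>\<F>. \<F> \<in> \<C> \<Longrightarrow> stable_filter M E S \<F>" and chain: "chain\<^sub>\<subseteq> \<C>"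
  shows "\<exists>\<U>. stable_filter M E S \<U> \<and> (\<forall>\<F>\<in>\<C>. \<F> \<subseteq> \<U>)"
proof (intro exI conjI ballI)
  define \<S> where "\<S> = {H \<in> \<Union>\<C>. stable_set M E H}"
  have \<S>_sub: "H \<subseteq> S" if "H \<in> \<S>" for H
    using that \<C> filter_onD(3)[OF stable_filter_filter_on] unfolding \<S>_def by blast
  show "stable_filter M E S (upclosure S (concat_closure M E \<S>))"
  proof (rule stable_filter_upclosure_concat_closure[OF E S])
    obtain \<F> where \<F>: "\<F> \<in> \<C>" using ne by blast
    then obtain H where "H \<in> \<F>" "stable_set M E H"
      using \<C> stable_filter_stable_subset filter_on_top stable_filter_filter_on by metis
    then show "\<S> \<noteq> {}" using \<F> unfolding \<S>_def by blast
    show "stable_set M E H \<and> H \<subseteq> S" if "H \<in> \<S>" for H using that \<S>_sub unfolding \<S>_def by blast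
  next
    fix H H' assume "H \<in> \<S>" "H' \<in> \<S>"
    \<comment> \<open>since \<open>\<C>\<close> is a chain, \<open>H\<close> and \<open>H'\<close> belong to a common filter of \<open>\<C>\<close>\<close>
    then obtain \<F> where \<F>: "\<F> \<in> \<C>" "H \<in> \<F>" "H' \<in> \<F>" and st: "stable_set M E H" "stable_set M E H'"
      using chain unfolding \<S>_def chain_subset_def by blast
    have f: "filter_on S \<F>" using stable_filter_filter_on[OF \<C>[OF \<F>(1)]] .
    have "H \<inter> H' \<in> \<F>" using filter_onD(4)[OF f \<F>(2,3)] .
    moreover from this have "H \<inter> H' \<noteq> {}" using filter_onD(2)[OF f] by auto
    ultimately show "H \<inter> H' \<in> \<S>" using stable_set_Int[OF st] \<F>(1) unfolding \<S>_def by blast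
  qed
  show "\<F> \<subseteq> upclosure S (concat_closure M E \<S>)" if \<F>: "\<F> \<in> \<C>" for \<F>
  proof
    fix F assume F: "F \<in> \<F>"
    obtain H where H: "H \<in> \<F>" "H \<subseteq> F" "stable_set M E H"
      using stable_filter_stable_subset[OF \<C>[OF \<F>] F] by blast
    have "H \<in> concat_closure M E \<S>"
      using H \<F> by (intro stable_set_in_concat_closure[OF E]) (auto simp: \<S>_def)
    moreover have "F \<subseteq> S" using filter_onD(3)[OF stable_filter_filter_on[OF \<C>[OF \<F>]] F] .
    ultimately show "F \<in> upclosure S (concat_closure M E \<S>)" using H(2) by (blast intro: upclosureI)
  qed
qed

definition maximal_stable_filter :: "'w measure \<Rightarrow> ('w, 'e) L0module \<Rightarrow> 'e set \<Rightarrow> 'e set set \<Rightarrow> bool" where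
  "maximal_stable_filter M E S \<U> \<longleftrightarrow>
     stable_filter M E S \<U> \<and> (\<forall>\<F>. stable_filter M E S \<F> \<and> \<U> \<subseteq> \<F> \<longrightarrow> \<F> = \<U>)"

lemma maximal_stable_filter_exists:
  assumes E: "concat_module M E" and S: "stable_set M E S" and \<F>: "stable_filter M E S \<F>"
  obtains \<U> where "maximal_stable_filter M E S \<U>" "\<F> \<subseteq> \<U>"
proof -
  let ?A = "{\<U>. stable_filter M E S \<U> \<and> \<F> \<subseteq> \<U>}"
  have "\<forall>\<C>\<in>chains ?A. \<exists>\<U>\<in>?A. \<forall>\<F>'\<in>\<C>. \<F>' \<subseteq> \<U>"
  proof
    fix \<C> assume \<C>: "\<C> \<in> chains ?A"
    show "\<exists>\<U>\<in>?A. \<forall>\<F>'\<in>\<C>. \<F>' \<subseteq> \<U>"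
  proof (cases "\<C> = {}")
    case True
    then show ?thesis using \<F> by blast
  next
    case False
    have ch: "chain\<^sub>\<subseteq> \<C>" and "\<C> \<subseteq> ?A" using \<C> unfolding chains_def by blast+
    then have "\<And>\<F>'. \<F>' \<in> \<C> \<Longrightarrow> stable_filter M E S \<F>'" by blast
    then obtain \<U> where \<U>: "stable_filter M E S \<U>" "\<And>\<F>'. \<F>' \<in> \<C> \<Longrightarrow> \<F>' \<subseteq> \<U>"
      using stable_filter_chain_upper_bound[OF E S False _ ch] by blast
    moreover have "\<F> \<subseteq> \<U>" using False \<U>(2) \<open>\<C> \<subseteq> ?A\<close> by blast
    ultimately show ?thesis by blast
  qed
  qed
  from Zorn_Lemma2[OF this] obtain \<U> where "\<U> \<in> ?A" "\<forall>\<F>'\<in>?A. \<U> \<subseteq> \<F>' \<longrightarrow> \<F>' = \<U>"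
    by blast
  then have "maximal_stable_filter M E S \<U>" "\<F> \<subseteq> \<U>" unfolding maximal_stable_filter_def by auto
  then show ?thesis by (rule that)
qed

lemma maximal_stable_filter_absorb:
  assumes E: "concat_module M E" and S: "stable_set M E S" and \<U>: "maximal_stable_filter M E S \<U>"
    and V: "stable_set M E V" "V \<subseteq> S" and meet: "\<And>F. F \<in> \<U> \<Longrightarrow> V \<inter> F \<noteq> {}"
  shows "V \<in> \<U>"
proof -
  have U: "stable_filter M E S \<U>" using \<U> unfolding maximal_stable_filter_def by blast
  have f: "filter_on S \<U>" using stable_filter_filter_on[OF U] .
  let ?\<G> = "{V \<inter> H | H. H \<in> \<U> \<and> stable_set M E H}"
  obtain H0 where H0: "H0 \<in> \<U>" "stable_set M E H0"
    using stable_filter_stable_subset[OF U filter_on_top[OF f]] by blast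
  have "stable_filter M E S (upclosure S ?\<G>)"
  proof (rule stable_filter_upclosure[OF E S])
    show "?\<G> \<noteq> {}" using H0 by blast
    show "stable_set M E H \<and> H \<subseteq> S" if "H \<in> ?\<G>" for H
      using that V meet stable_set_Int by blast
  next
    fix H1 H2 assume "H1 \<in> ?\<G>" "H2 \<in> ?\<G>"
    then obtain G1 G2 where G: "H1 = V \<inter> G1" "H2 = V \<inter> G2" "G1 \<in> \<U>" "G2 \<in> \<U>" by blast
    obtain H where "H \<in> \<U>" "H \<subseteq> G1 \<inter> G2" "stable_set M E H"
      using stable_filter_stable_subset[OF U filter_onD(4)[OF f G(3,4)]] by blast
    then have "V \<inter> H \<in> ?\<G>" "V \<inter> H \<subseteq> H1 \<inter> H2" unfolding G by blast+
    then show "\<exists>H''\<in>?\<G>. H'' \<subseteq> H1 \<inter> H2" by blast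
  next
    fix A and Y :: "nat \<Rightarrow> _" assume A: "meas_partition M A" and Y: "\<And>k. Y k \<in> ?\<G>"
    have "\<forall>k. \<exists>H. Y k = V \<inter> H \<and> H \<in> \<U> \<and> stable_set M E H" using Y by blast
    then obtain H where "\<forall>k. Y k = V \<inter> H k \<and> H k \<in> \<U> \<and> stable_set M E (H k)"
      by (rule choice[THEN exE])
    then have Y_eq: "Y = (\<lambda>k. V \<inter> H k)" and H: "\<And>k. H k \<in> \<U>" "\<And>k. stable_set M E (H k)" by auto
    have "concat_sets M E A H \<in> \<U>" using stable_filter_concat_sets[OF U S A H(1)] .
    moreover have "stable_set M E (concat_sets M E A H)" using stable_set_concat_sets[OF E A H(2)] .
    moreover have "V \<inter> concat_sets M E A H \<subseteq> concat_sets M E A Y"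
      unfolding Y_eq using H meet by (intro Int_concat_sets_subset[OF E A V(1)]) blast+
    ultimately show "\<exists>H'\<in>?\<G>. H' \<subseteq> concat_sets M E A Y" by blast
  qed
  moreover have "\<U> \<subseteq> upclosure S ?\<G>"
  proof
    fix F assume F: "F \<in> \<U>"
    obtain H where "H \<in> \<U>" "H \<subseteq> F" "stable_set M E H" using stable_filter_stable_subset[OF U F] by blast
    then show "F \<in> upclosure S ?\<G>" using filter_onD(3)[OF f F] by (blast intro: upclosureI)
  qed
  ultimately have "upclosure S ?\<G> = \<U>" using \<U> unfolding maximal_stable_filter_def by blast
  moreover have "V \<in> upclosure S ?\<G>" using H0 V(2) by (blast intro: upclosureI)
  ultimately show ?thesis by simp
qed

section \<open>Product modules and the stable product topology\<close>

lemma prod_module_carrier [simp]: "mcarr (prod_module I E) = (\<Pi>\<^sub>E i\<in>I. mcarr (E i))"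
  unfolding prod_module_def by simp

lemma prod_module_smul [simp]: "msmul (prod_module I E) f x = restrict (\<lambda>i. msmul (E i) f (x i)) I"
  unfolding prod_module_def by simp

lemma restrict_concat_prod_module:
  assumes E: "\<And>i. i \<in> I \<Longrightarrow> concat_module M (E i)" and A: "meas_partition M A"
    and x: "\<And>k. x k \<in> (\<Pi>\<^sub>E i\<in>I. mcarr (E i))"
  defines "c \<equiv> restrict (\<lambda>i. concat M (E i) A (\<lambda>k. x k i)) I"
  shows "c \<in> (\<Pi>\<^sub>E i\<in>I. mcarr (E i))"
    and "msmul (prod_module I E) (indicator (A k)) c = msmul (prod_module I E) (indicator (A k)) (x k)"
proof -
  have xi: "x k i \<in> mcarr (E i)" if "i \<in> I" for i k using x that by blast
  show "c \<in> (\<Pi>\<^sub>E i\<in>I. mcarr (E i))" unfolding c_def using concat_in_carrier[OF E A] xi by simp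
  show "msmul (prod_module I E) (indicator (A k)) c = msmul (prod_module I E) (indicator (A k)) (x k)"
    unfolding c_def using smul_indicator_concat[OF E A] xi by (auto intro!: restrict_ext)
qed

lemma concat_module_prod_module:
  assumes E: "\<And>i. i \<in> I \<Longrightarrow> concat_module M (E i)"
  shows "concat_module M (prod_module I E)"
  unfolding concat_module_def
proof (intro conjI ballI allI impI)
  fix f :: "_ \<Rightarrow> real" and x assume "f \<in> borel_measurable M" "x \<in> mcarr (prod_module I E)"
  then show "msmul (prod_module I E) f x \<in> mcarr (prod_module I E)"
    using E unfolding concat_module_def by (auto simp: PiE_iff)
next
  fix f g :: "_ \<Rightarrow> real" and x
  assume "f \<in> borel_measurable M" "g \<in> borel_measurable M" "x \<in> mcarr (prod_module I E)"
  then show "msmul (prod_module I E) (\<lambda>w. f w * g w) x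
      = msmul (prod_module I E) f (msmul (prod_module I E) g x)"
    using E unfolding concat_module_def by (auto simp: PiE_iff intro!: restrict_ext)
next
  fix A and x :: "nat \<Rightarrow> _" assume "meas_partition M A \<and> (\<forall>k. x k \<in> mcarr (prod_module I E))"
  then have A: "meas_partition M A" and x: "\<And>k. x k \<in> (\<Pi>\<^sub>E i\<in>I. mcarr (E i))" by auto
  let ?c = "restrict (\<lambda>i. concat M (E i) A (\<lambda>k. x k i)) I"
  note c = restrict_concat_prod_module[where I=I and E=E, OF E A x]
  show "\<exists>!y. y \<in> mcarr (prod_module I E) \<and>
      (\<forall>k. msmul (prod_module I E) (indicator (A k)) y = msmul (prod_module I E) (indicator (A k)) (x k))"
  proof (rule ex1I[of _ ?c])
    show "?c \<in> mcarr (prod_module I E) \<and>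
      (\<forall>k. msmul (prod_module I E) (indicator (A k)) ?c = msmul (prod_module I E) (indicator (A k)) (x k))"
      using c by simp
    fix y assume y: "y \<in> mcarr (prod_module I E) \<and>
      (\<forall>k. msmul (prod_module I E) (indicator (A k)) y = msmul (prod_module I E) (indicator (A k)) (x k))"
    show "y = ?c"
    proof (rule PiE_ext)
      show "y \<in> (\<Pi>\<^sub>E i\<in>I. mcarr (E i))" "?c \<in> (\<Pi>\<^sub>E i\<in>I. mcarr (E i))" using y c(1) by auto
      fix i assume i: "i \<in> I"
      have "restrict (\<lambda>i. msmul (E i) (indicator (A k)) (y i)) I
          = restrict (\<lambda>i. msmul (E i) (indicator (A k)) (x k i)) I" for k
        using y by simp
      then have "msmul (E i) (indicator (A k)) (y i) = msmul (E i) (indicator (A k)) (x k i)" for k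
        using fun_cong[of _ _ i] i by fastforce
      moreover have "y i \<in> mcarr (E i)" "x k i \<in> mcarr (E i)" for k using x y i by auto
      ultimately have "concat M (E i) A (\<lambda>k. x k i) = y i"
        by (intro concat_unique[OF E[OF i] A]) auto
      then show "y i = ?c i" using i by simp
    qed
  qed
qed

lemma concat_prod_module:
  assumes E: "\<And>i. i \<in> I \<Longrightarrow> concat_module M (E i)" and A: "meas_partition M A"
    and x: "\<And>k. x k \<in> (\<Pi>\<^sub>E i\<in>I. mcarr (E i))"
  shows "concat M (prod_module I E) A x = restrict (\<lambda>i. concat M (E i) A (\<lambda>k. x k i)) I"
  using restrict_concat_prod_module[where I=I and E=E, OF E A x] x
  by (intro concat_unique[OF concat_module_prod_module[where I=I and E=E, OF E] A]) auto

lemma stable_set_PiE: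
  assumes E: "\<And>i. i \<in> I \<Longrightarrow> concat_module M (E i)" and U: "\<And>i. i \<in> I \<Longrightarrow> stable_set M (E i) (U i)"
  shows "stable_set M (prod_module I E) (\<Pi>\<^sub>E i\<in>I. U i)"
proof (rule stable_setI)
  have Uc: "U i \<subseteq> mcarr (E i)" if "i \<in> I" for i using U[OF that] by (rule stable_set_subset_carrier)
  show "(\<Pi>\<^sub>E i\<in>I. U i) \<noteq> {}" using U stable_set_nonempty by (auto simp: PiE_eq_empty_iff)
  show "(\<Pi>\<^sub>E i\<in>I. U i) \<subseteq> mcarr (prod_module I E)" using Uc by (auto intro: PiE_mono)
  fix A x assume A: "meas_partition M A" and x: "\<And>k::nat. x k \<in> (\<Pi>\<^sub>E i\<in>I. U i)"
  have "x k \<in> (\<Pi>\<^sub>E i\<in>I. mcarr (E i))" for k using x[of k] Uc by (auto simp: PiE_iff)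
  moreover have "concat M (E i) A (\<lambda>k. x k i) \<in> U i" if "i \<in> I" for i
    using x that by (intro stable_set_concat[OF U A]) auto
  ultimately show "concat M (prod_module I E) A x \<in> (\<Pi>\<^sub>E i\<in>I. U i)"
    by (simp add: concat_prod_module[where I=I and E=E, OF E A])
qed

lemma image_proj_concat_sets:
  assumes E: "\<And>i. i \<in> I \<Longrightarrow> concat_module M (E i)" and A: "meas_partition M A" and i: "i \<in> I"
    and Y: "\<And>k. Y k \<subseteq> mcarr (prod_module I E)"
  shows "(\<lambda>z. z i) ` concat_sets M (prod_module I E) A Y \<subseteq> concat_sets M (E i) A (\<lambda>k. (\<lambda>z. z i) ` Y k)"
proof
  fix w assume "w \<in> (\<lambda>z. z i) ` concat_sets M (prod_module I E) A Y"
  then obtain y where w: "w = concat M (prod_module I E) A y i" and y: "\<And>k. y k \<in> Y k"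
    by (auto elim!: concat_setsE)
  have "y k \<in> (\<Pi>\<^sub>E i\<in>I. mcarr (E i))" for k using y Y by (metis prod_module_carrier subsetD)
  then have "w = concat M (E i) A (\<lambda>k. y k i)" unfolding w using concat_prod_module[where I=I and E=E, OF E A] i by simp
  then show "w \<in> concat_sets M (E i) A (\<lambda>k. (\<lambda>z. z i) ` Y k)" using y by (auto intro: concat_setsI)
qed

lemma stable_set_image_proj:
  assumes E: "\<And>i. i \<in> I \<Longrightarrow> concat_module M (E i)" and i: "i \<in> I"
    and H: "stable_set M (prod_module I E) H"
  shows "stable_set M (E i) ((\<lambda>z. z i) ` H)"
proof (rule stable_setI)
  have Hc: "H \<subseteq> (\<Pi>\<^sub>E i\<in>I. mcarr (E i))" using stable_set_subset_carrier[OF H] by simp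
  show "(\<lambda>z. z i) ` H \<noteq> {}" using stable_set_nonempty[OF H] by blast
  show "(\<lambda>z. z i) ` H \<subseteq> mcarr (E i)" using Hc i by auto
  fix A and x :: "nat \<Rightarrow> _" assume A: "meas_partition M A" and x: "\<And>k. x k \<in> (\<lambda>z. z i) ` H"
  have "\<forall>k. \<exists>h. h \<in> H \<and> x k = h i" using x by blast
  then obtain h where "\<forall>k. h k \<in> H \<and> x k = h k i" by (rule choice[THEN exE])
  then have h: "\<And>k. h k \<in> H" and x_eq: "x = (\<lambda>k. h k i)" by auto
  have "h k \<in> (\<Pi>\<^sub>E i\<in>I. mcarr (E i))" for k using h Hc by blast
  then have "concat M (E i) A x = concat M (prod_module I E) A h i"
    unfolding x_eq using concat_prod_module[where I=I and E=E, OF E A] i by simp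
  moreover have "concat M (prod_module I E) A h \<in> H" using stable_set_concat[OF H A h] .
  ultimately show "concat M (E i) A x \<in> (\<lambda>z. z i) ` H" by simp
qed

lemma prod_module_local_witness:
  assumes h: "h \<in> (\<Pi>\<^sub>E i\<in>I. mcarr (E i))"
    and c: "\<And>i. i \<in> I \<Longrightarrow> \<exists>c\<in>Y i. msmul (E i) f c = msmul (E i) f (h i)"
  shows "\<exists>z\<in>\<Pi>\<^sub>E i\<in>I. Y i. msmul (prod_module I E) f z = msmul (prod_module I E) f h"
proof -
  obtain c where "\<forall>i\<in>I. c i \<in> Y i \<and> msmul (E i) f (c i) = msmul (E i) f (h i)"
    using c by metis
  then have "restrict c I \<in> (\<Pi>\<^sub>E i\<in>I. Y i)"
    "msmul (prod_module I E) f (restrict c I) = msmul (prod_module I E) f h"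
    by (auto intro!: restrict_ext)
  then show ?thesis by blast
qed

locale stable_product =
  fixes M :: "'w measure" and I :: "'i set" and E :: "'i \<Rightarrow> ('w, 'e) L0module"
    and S :: "'i \<Rightarrow> 'e set" and T :: "'i \<Rightarrow> 'e topology" and B :: "'i \<Rightarrow> 'e set set"
  assumes concat_module: "i \<in> I \<Longrightarrow> concat_module M (E i)"
    and stable_set_space: "i \<in> I \<Longrightarrow> stable_set M (E i) (S i)"
    and topspace: "i \<in> I \<Longrightarrow> topspace (T i) = S i"
    and stable_base: "i \<in> I \<Longrightarrow> stable_base M (E i) (T i) (B i)"
begin

abbreviation Sprod :: "('i \<Rightarrow> 'e) set" where "Sprod \<equiv> \<Pi>\<^sub>E i\<in>I. S i"
abbreviation Eprod :: "('w, 'i \<Rightarrow> 'e) L0module" where "Eprod \<equiv> prod_module I E"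

lemma concat_module_Eprod: "concat_module M Eprod"
  using concat_module_prod_module[where I=I and E=E] concat_module by blast

lemma stable_set_Sprod: "stable_set M Eprod Sprod"
  using stable_set_PiE[where I=I and E=E and U=S] concat_module stable_set_space by blast

lemma Sprod_subset_carrier: "Sprod \<subseteq> (\<Pi>\<^sub>E i\<in>I. mcarr (E i))"
  using stable_set_subset_carrier[OF stable_set_Sprod] by simp

lemma space_subset_carrier: "i \<in> I \<Longrightarrow> S i \<subseteq> mcarr (E i)"
  using stable_set_space by (rule stable_set_subset_carrier)

lemma
  assumes "i \<in> I" "V \<in> B i"
  shows base_openin: "openin (T i) V" and base_subset: "V \<subseteq> S i"
    and base_stable: "stable_set M (E i) V"
  using assms stable_base topspace openin_subset
  unfolding stable_base_def stable_collection_def by fastforce+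

lemma base_concat_sets:
  "i \<in> I \<Longrightarrow> meas_partition M A \<Longrightarrow> (\<And>k. Y k \<in> B i) \<Longrightarrow> concat_sets M (E i) A Y \<in> B i"
  using stable_base unfolding stable_base_def stable_collection_def by blast

lemma base_nhd:
  assumes "i \<in> I" "openin (T i) U" "x \<in> U"
  obtains V where "V \<in> B i" "x \<in> V" "V \<subseteq> U"
  using assms stable_base unfolding stable_base_def by (metis UnionE Union_upper subset_iff)

lemma base_cover:
  assumes "i \<in> I" "x \<in> S i"
  obtains V where "V \<in> B i" "x \<in> V"
  using base_nhd[OF assms(1) _ assms(2)] topspace[OF assms(1)] by (metis openin_topspace)

definition box :: "'i set \<Rightarrow> ('i \<Rightarrow> 'e set) \<Rightarrow> ('i \<Rightarrow> 'e) set" where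
  "box J V = (\<Pi>\<^sub>E i\<in>I. if i \<in> J then V i else S i)"

abbreviation cylinder :: "'i \<Rightarrow> 'e set \<Rightarrow> ('i \<Rightarrow> 'e) set" where
  "cylinder j V \<equiv> box {j} (\<lambda>_. V)"

lemma box_empty [simp]: "box {} V = Sprod"
  by (simp add: box_def)

lemma mem_box:
  "(\<And>i. i \<in> J \<Longrightarrow> i \<in> I \<Longrightarrow> V i \<subseteq> S i) \<Longrightarrow> z \<in> box J V \<longleftrightarrow> z \<in> Sprod \<and> (\<forall>i\<in>J \<inter> I. z i \<in> V i)"
  unfolding box_def by (auto simp: PiE_iff)

lemma mem_cylinder: "V \<subseteq> S j \<Longrightarrow> z \<in> cylinder j V \<longleftrightarrow> z \<in> Sprod \<and> (j \<in> I \<longrightarrow> z j \<in> V)"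
  by (subst mem_box) auto

lemma box_subset: "(\<And>i. i \<in> J \<Longrightarrow> i \<in> I \<Longrightarrow> V i \<subseteq> S i) \<Longrightarrow> box J V \<subseteq> Sprod"
  by (auto simp: mem_box)

lemma box_mono: "(\<And>i. i \<in> J \<Longrightarrow> V i \<subseteq> W i) \<Longrightarrow> box J V \<subseteq> box J W"
  unfolding box_def by (rule PiE_mono) auto

lemma box_insert:
  assumes "\<And>i. i \<in> insert j J \<Longrightarrow> i \<in> I \<Longrightarrow> V i \<subseteq> S i"
  shows "box (insert j J) V = cylinder j (V j) \<inter> box J V"
proof (rule set_eqI)
  fix z
  have "z \<in> box (insert j J) V \<longleftrightarrow> z \<in> Sprod \<and> (\<forall>i\<in>insert j J \<inter> I. z i \<in> V i)"
    by (rule mem_box) (use assms in blast)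
  moreover have "z \<in> cylinder j (V j) \<longleftrightarrow> z \<in> Sprod \<and> (\<forall>i\<in>{j} \<inter> I. z i \<in> V j)"
    by (rule mem_box) (use assms in blast)
  moreover have "z \<in> box J V \<longleftrightarrow> z \<in> Sprod \<and> (\<forall>i\<in>J \<inter> I. z i \<in> V i)"
    by (rule mem_box) (use assms in blast)
  ultimately show "z \<in> box (insert j J) V \<longleftrightarrow> z \<in> cylinder j (V j) \<inter> box J V" by blast
qed

lemma box_eq_Int_cylinders:
  "finite J \<Longrightarrow> (\<And>i. i \<in> J \<Longrightarrow> i \<in> I \<Longrightarrow> V i \<subseteq> S i) \<Longrightarrow> box J V = Sprod \<inter> (\<Inter>j\<in>J. cylinder j (V j))"
proof (induction J rule: finite_induct)
  case (insert j J)
  have "box (insert j J) V = cylinder j (V j) \<inter> box J V" by (rule box_insert) (use insert.prems in blast)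
  also have "box J V = Sprod \<inter> (\<Inter>j\<in>J. cylinder j (V j))" using insert.IH insert.prems by blast
  finally show ?case by auto
qed simp

lemma stable_set_box:
  "(\<And>i. i \<in> J \<Longrightarrow> i \<in> I \<Longrightarrow> stable_set M (E i) (V i)) \<Longrightarrow> stable_set M Eprod (box J V)"
  unfolding box_def using stable_set_space concat_module
  by (intro stable_set_PiE[where I=I and E=E]) auto

lemma box_in_prod_base:
  assumes J: "finite J" and V: "\<And>i. i \<in> J \<Longrightarrow> i \<in> I \<Longrightarrow> V i \<in> B i"
  shows "box J V \<in> prod_base M I E S B"
proof -
  let ?A = "partition2 M (space M)" and ?U = "\<lambda>k i. if i \<in> J then V i else S i"
  have A: "meas_partition M ?A" by (simp add: meas_partition_partition2)
  have "stable_set M Eprod (box J V)" using V base_stable by (intro stable_set_box) blast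
  then have eq: "box J V = concat_sets M Eprod ?A (\<lambda>k. \<Pi>\<^sub>E i\<in>I. ?U k i)"
    using concat_sets_const[OF concat_module_Eprod A] unfolding box_def by simp
  have fin: "finite {i \<in> I. ?U k i \<noteq> S i}" for k
    using J by (rule finite_subset[rotated]) auto
  show ?thesis
    unfolding prod_base_def mem_Collect_eq
    by (intro exI[of _ ?A] exI[of _ ?U] conjI allI ballI) (use eq A fin V in auto)
qed

lemma cylinder_concat_sets_subset:
  assumes j: "j \<in> I" and A: "meas_partition M A" and F: "\<And>k. F k \<subseteq> S j"
  shows "cylinder j (concat_sets M (E j) A F) \<subseteq> concat_sets M Eprod A (\<lambda>k. cylinder j (F k))"
proof
  have cS: "concat_sets M (E j) A F \<subseteq> S j" by (rule concat_sets_subset[OF stable_set_space[OF j] A F])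
  fix x assume "x \<in> cylinder j (concat_sets M (E j) A F)"
  then have x: "x \<in> Sprod" and "x j \<in> concat_sets M (E j) A F" using j mem_cylinder[OF cS] by auto
  then obtain f where xf: "x j = concat M (E j) A f" and f: "\<And>k. f k \<in> F k"
    by (elim concat_setsE) blast
  \<comment> \<open>replace the \<open>j\<close>-th coordinate of \<open>x\<close> by \<open>f k\<close>; concatenating gives back \<open>x\<close>\<close>
  define z where "z k = x(j := f k)" for k
  have z: "z k \<in> cylinder j (F k)" for k
  proof -
    have "z k \<in> Pi\<^sub>E (insert j I) S" unfolding z_def using F f x by (intro PiE_fun_upd) blast+
    then show ?thesis using f[of k] j insert_absorb[OF j] unfolding mem_cylinder[OF F[of k]] by (simp add: z_def)
  qed
  have "z k \<in> Sprod" for k using z[of k] mem_cylinder[OF F[of k]] by simp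
  then have zc: "z k \<in> (\<Pi>\<^sub>E i\<in>I. mcarr (E i))" for k by (rule subsetD[OF Sprod_subset_carrier])
  have xc: "x i \<in> mcarr (E i)" if "i \<in> I" for i using x that space_subset_carrier by blast
  have "concat M Eprod A z = restrict (\<lambda>i. concat M (E i) A (\<lambda>k. z k i)) I"
    using concat_prod_module[where I=I and E=E, OF concat_module A zc] .
  also have "\<dots> = x"
  proof (rule ext)
    fix i
    consider "i = j" | "i \<in> I" "i \<noteq> j" | "i \<notin> I" using j by blast
    then show "restrict (\<lambda>i. concat M (E i) A (\<lambda>k. z k i)) I i = x i"
    proof cases
      case 2
      then show ?thesis using concat_const[OF concat_module A xc] by (simp add: z_def)
    next
      case 3
      then show ?thesis using x by (simp add: PiE_def extensional_def)
    qed (use j xf in \<open>simp add: z_def\<close>)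
  qed
  finally have "concat M Eprod A z = x" .
  moreover have "concat M Eprod A z \<in> concat_sets M Eprod A (\<lambda>k. cylinder j (F k))"
    using z by (rule concat_setsI)
  ultimately show "x \<in> concat_sets M Eprod A (\<lambda>k. cylinder j (F k))" by simp
qed

lemma prod_open_cylinder:
  assumes "j \<in> I" "V \<in> B j"
  shows "prod_open M I E S B (cylinder j V)"
  unfolding prod_open_def using box_in_prod_base[of "{j}" "\<lambda>_. V"] assms
  by (intro exI[of _ "{cylinder j V}"]) auto

definition cylinder_filter :: "'i \<Rightarrow> 'e set set \<Rightarrow> ('i \<Rightarrow> 'e) set set" where
  "cylinder_filter j \<F> = upclosure Sprod ((\<lambda>H. cylinder j H) ` {H \<in> \<F>. stable_set M (E j) H})"

lemma stable_filter_cylinder_filter: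
  assumes \<F>: "stable_filter M (E j) (S j) \<F>" and j: "j \<in> I"
  shows "stable_filter M Eprod Sprod (cylinder_filter j \<F>)"
  unfolding cylinder_filter_def
proof (rule stable_filter_upclosure[OF concat_module_Eprod stable_set_Sprod])
  have f: "filter_on (S j) \<F>" using stable_filter_filter_on[OF \<F>] .
  have sub: "H \<subseteq> S j" if "H \<in> \<F>" for H using filter_onD(3)[OF f that] .
  obtain H where "H \<in> \<F>" "stable_set M (E j) H"
    using stable_filter_stable_subset[OF \<F> filter_on_top[OF f]] by blast
  then show "(\<lambda>H. cylinder j H) ` {H \<in> \<F>. stable_set M (E j) H} \<noteq> {}" by blast
  show "stable_set M Eprod G \<and> G \<subseteq> Sprod" if "G \<in> (\<lambda>H. cylinder j H) ` {H \<in> \<F>. stable_set M (E j) H}" for G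
    using that sub by (auto intro!: stable_set_box box_subset)
  fix G G' assume "G \<in> (\<lambda>H. cylinder j H) ` {H \<in> \<F>. stable_set M (E j) H}"
    "G' \<in> (\<lambda>H. cylinder j H) ` {H \<in> \<F>. stable_set M (E j) H}"
  then obtain H H' where G: "G = cylinder j H" "G' = cylinder j H'" "H \<in> \<F>" "H' \<in> \<F>" by blast
  obtain H'' where "H'' \<in> \<F>" "H'' \<subseteq> H \<inter> H'" "stable_set M (E j) H''"
    using stable_filter_stable_subset[OF \<F> filter_onD(4)[OF f G(3,4)]] by blast
  moreover from this(2) have "cylinder j H'' \<subseteq> cylinder j H" "cylinder j H'' \<subseteq> cylinder j H'"
    by (auto intro!: box_mono)
  ultimately show "\<exists>G''\<in>(\<lambda>H. cylinder j H) ` {H \<in> \<F>. stable_set M (E j) H}. G'' \<subseteq> G \<inter> G'"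
    unfolding G by blast
next
  fix A and Y :: "nat \<Rightarrow> _"
  assume A: "meas_partition M A" and Y: "\<And>k. Y k \<in> (\<lambda>H. cylinder j H) ` {H \<in> \<F>. stable_set M (E j) H}"
  have "\<forall>k. \<exists>H. Y k = cylinder j H \<and> H \<in> \<F> \<and> stable_set M (E j) H" using Y by blast
  then obtain H where "\<forall>k. Y k = cylinder j (H k) \<and> H k \<in> \<F> \<and> stable_set M (E j) (H k)"
    by (rule choice[THEN exE])
  then have Y_eq: "Y = (\<lambda>k. cylinder j (H k))" and H: "\<And>k. H k \<in> \<F>" "\<And>k. stable_set M (E j) (H k)"
    by auto
  have "concat_sets M (E j) A H \<in> \<F>" using stable_filter_concat_sets[OF \<F> stable_set_space[OF j] A H(1)] .
  moreover have "stable_set M (E j) (concat_sets M (E j) A H)"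
    using stable_set_concat_sets[OF concat_module[OF j] A H(2)] .
  moreover have "cylinder j (concat_sets M (E j) A H) \<subseteq> concat_sets M Eprod A Y"
    unfolding Y_eq using filter_onD(3)[OF stable_filter_filter_on[OF \<F>] H(1)]
    by (rule cylinder_concat_sets_subset[OF j A])
  ultimately show "\<exists>G\<in>(\<lambda>H. cylinder j H) ` {H \<in> \<F>. stable_set M (E j) H}. G \<subseteq> concat_sets M Eprod A Y"
    by blast
qed

lemma stable_compact_factor:
  assumes compact: "stable_compact M Eprod Sprod (prod_open M I E S B)" and j: "j \<in> I"
  shows "stable_compact M (E j) (S j) (openin (T j))"
  unfolding stable_compact_def
proof (intro allI impI)
  fix \<F> assume \<F>: "stable_filter M (E j) (S j) \<F>"
  obtain x where x: "x \<in> Sprod" and cl: "cluster_point (prod_open M I E S B) (cylinder_filter j \<F>) x"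
    using compact stable_filter_cylinder_filter[OF \<F> j] unfolding stable_compact_def by blast
  have "cluster_point (openin (T j)) \<F> (x j)"
    unfolding cluster_point_def
  proof (intro allI impI ballI)
    fix U F assume U: "openin (T j) U \<and> x j \<in> U" and F: "F \<in> \<F>"
    obtain V where V: "V \<in> B j" "x j \<in> V" "V \<subseteq> U" using base_nhd[OF j] U by blast
    obtain H where H: "H \<in> \<F>" "H \<subseteq> F" "stable_set M (E j) H"
      using stable_filter_stable_subset[OF \<F> F] by blast
    have HS: "H \<subseteq> S j" using filter_onD(3)[OF stable_filter_filter_on[OF \<F>] H(1)] .
    have "x \<in> cylinder j V" using mem_cylinder[OF base_subset[OF j V(1)]] x V(2) by blast
    moreover have "cylinder j H \<in> cylinder_filter j \<F>"
      unfolding cylinder_filter_def using H HS by (intro upclosureI[OF box_subset]) auto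
    ultimately have "cylinder j V \<inter> cylinder j H \<noteq> {}"
      using cl prod_open_cylinder[OF j V(1)] unfolding cluster_point_def by blast
    then obtain z where "z \<in> cylinder j V" "z \<in> cylinder j H" by blast
    then have "z j \<in> V" "z j \<in> H"
      using mem_cylinder[OF base_subset[OF j V(1)]] mem_cylinder[OF HS] j by auto
    then show "U \<inter> F \<noteq> {}" using V(3) H(2) by blast
  qed
  then show "\<exists>x\<in>S j. cluster_point (openin (T j)) \<F> x" using x j by auto
qed

definition proj_filter :: "('i \<Rightarrow> 'e) set set \<Rightarrow> 'i \<Rightarrow> 'e set set" where
  "proj_filter \<U> i = upclosure (S i) ((\<lambda>H. (\<lambda>z. z i) ` H) ` {H \<in> \<U>. stable_set M Eprod H})"

lemma stable_filter_proj_filter: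
  assumes \<U>: "stable_filter M Eprod Sprod \<U>" and i: "i \<in> I"
  shows "stable_filter M (E i) (S i) (proj_filter \<U> i)"
  unfolding proj_filter_def
proof (rule stable_filter_upclosure[OF concat_module[OF i] stable_set_space[OF i]])
  have f: "filter_on Sprod \<U>" using stable_filter_filter_on[OF \<U>] .
  have sub: "H \<subseteq> Sprod" if "H \<in> \<U>" for H using filter_onD(3)[OF f that] .
  obtain H where "H \<in> \<U>" "stable_set M Eprod H"
    using stable_filter_stable_subset[OF \<U> filter_on_top[OF f]] by blast
  then show "(\<lambda>H. (\<lambda>z. z i) ` H) ` {H \<in> \<U>. stable_set M Eprod H} \<noteq> {}" by blast
  show "stable_set M (E i) G \<and> G \<subseteq> S i"
    if G: "G \<in> (\<lambda>H. (\<lambda>z. z i) ` H) ` {H \<in> \<U>. stable_set M Eprod H}" for G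
  proof -
    obtain H where G: "G = (\<lambda>z. z i) ` H" "H \<in> \<U>" "stable_set M Eprod H" using G by blast
    have "stable_set M (E i) G" unfolding G(1) using stable_set_image_proj[OF concat_module i G(3)] .
    moreover have "G \<subseteq> S i" unfolding G(1) using sub[OF G(2)] i by auto
    ultimately show ?thesis by blast
  qed
  fix G G' assume "G \<in> (\<lambda>H. (\<lambda>z. z i) ` H) ` {H \<in> \<U>. stable_set M Eprod H}"
    "G' \<in> (\<lambda>H. (\<lambda>z. z i) ` H) ` {H \<in> \<U>. stable_set M Eprod H}"
  then obtain H H' where G: "G = (\<lambda>z. z i) ` H" "G' = (\<lambda>z. z i) ` H'" "H \<in> \<U>" "H' \<in> \<U>" by blast
  obtain H'' where "H'' \<in> \<U>" "H'' \<subseteq> H \<inter> H'" "stable_set M Eprod H''"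
    using stable_filter_stable_subset[OF \<U> filter_onD(4)[OF f G(3,4)]] by blast
  then have "(\<lambda>z. z i) ` H'' \<in> (\<lambda>H. (\<lambda>z. z i) ` H) ` {H \<in> \<U>. stable_set M Eprod H}"
    "(\<lambda>z. z i) ` H'' \<subseteq> G \<inter> G'" unfolding G by blast+
  then show "\<exists>G''\<in>(\<lambda>H. (\<lambda>z. z i) ` H) ` {H \<in> \<U>. stable_set M Eprod H}. G'' \<subseteq> G \<inter> G'" by blast
next
  fix A and Y :: "nat \<Rightarrow> _" assume A: "meas_partition M A"
    and Y: "\<And>k. Y k \<in> (\<lambda>H. (\<lambda>z. z i) ` H) ` {H \<in> \<U>. stable_set M Eprod H}"
  have "\<forall>k. \<exists>H. Y k = (\<lambda>z. z i) ` H \<and> H \<in> \<U> \<and> stable_set M Eprod H" using Y by blast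
  then obtain H where "\<forall>k. Y k = (\<lambda>z. z i) ` H k \<and> H k \<in> \<U> \<and> stable_set M Eprod (H k)"
    by (rule choice[THEN exE])
  then have Y_eq: "Y = (\<lambda>k. (\<lambda>z. z i) ` H k)" and H: "\<And>k. H k \<in> \<U>" "\<And>k. stable_set M Eprod (H k)"
    by auto
  have "concat_sets M Eprod A H \<in> \<U>" using stable_filter_concat_sets[OF \<U> stable_set_Sprod A H(1)] .
  moreover have "stable_set M Eprod (concat_sets M Eprod A H)"
    using stable_set_concat_sets[OF concat_module_Eprod A H(2)] .
  moreover have "H k \<subseteq> mcarr Eprod" for k using H(2) by (rule stable_set_subset_carrier)
  then have "(\<lambda>z. z i) ` concat_sets M Eprod A H \<subseteq> concat_sets M (E i) A Y"
    unfolding Y_eq using image_proj_concat_sets[where I=I and E=E and Y=H, OF concat_module A i] by simp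
  ultimately show "\<exists>G\<in>(\<lambda>H. (\<lambda>z. z i) ` H) ` {H \<in> \<U>. stable_set M Eprod H}. G \<subseteq> concat_sets M (E i) A Y"
    by blast
qed

lemma image_proj_in_proj_filter:
  assumes \<U>: "stable_filter M Eprod Sprod \<U>" and i: "i \<in> I" and F: "F \<in> \<U>"
  shows "(\<lambda>z. z i) ` F \<in> proj_filter \<U> i"
proof -
  obtain H where "H \<in> \<U>" "H \<subseteq> F" "stable_set M Eprod H" using stable_filter_stable_subset[OF \<U> F] by blast
  moreover have "(\<lambda>z. z i) ` F \<subseteq> S i" using filter_onD(3)[OF stable_filter_filter_on[OF \<U>] F] i by auto
  ultimately show ?thesis unfolding proj_filter_def by (blast intro: upclosureI)
qed

lemma cylinder_in_maximal_stable_filter: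
  assumes \<U>: "maximal_stable_filter M Eprod Sprod \<U>" and i: "i \<in> I"
    and cl: "cluster_point (openin (T i)) (proj_filter \<U> i) a" and V: "V \<in> B i" "a \<in> V"
  shows "cylinder i V \<in> \<U>"
proof (rule maximal_stable_filter_absorb[OF concat_module_Eprod stable_set_Sprod \<U>])
  have VS: "V \<subseteq> S i" using base_subset[OF i V(1)] .
  have U: "stable_filter M Eprod Sprod \<U>" using \<U> unfolding maximal_stable_filter_def by blast
  show "stable_set M Eprod (cylinder i V)" using base_stable[OF i V(1)] by (intro stable_set_box) simp
  show "cylinder i V \<subseteq> Sprod" using VS by (intro box_subset) simp
  fix F assume F: "F \<in> \<U>"
  have "V \<inter> (\<lambda>z. z i) ` F \<noteq> {}"
    using cl base_openin[OF i V(1)] V(2) image_proj_in_proj_filter[OF U i F]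
    unfolding cluster_point_def by blast
  then obtain z where z: "z \<in> F" "z i \<in> V" by blast
  moreover have "z \<in> Sprod" using filter_onD(3)[OF stable_filter_filter_on[OF U] F] z(1) by blast
  ultimately show "cylinder i V \<inter> F \<noteq> {}" using mem_cylinder[OF VS] by blast
qed

lemma box_in_maximal_stable_filter:
  assumes \<U>: "maximal_stable_filter M Eprod Sprod \<U>"
    and cl: "\<And>i. i \<in> I \<Longrightarrow> cluster_point (openin (T i)) (proj_filter \<U> i) (x i)"
    and J: "finite J" "J \<subseteq> I" and V: "\<And>i. i \<in> J \<Longrightarrow> V i \<in> B i \<and> x i \<in> V i"
  shows "box J V \<in> \<U>"
proof -
  have f: "filter_on Sprod \<U>" using \<U> stable_filter_filter_on unfolding maximal_stable_filter_def by blast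
  have "box J V = Sprod \<inter> (\<Inter>j\<in>J. cylinder j (V j))"
    using J(1) V base_subset by (intro box_eq_Int_cylinders) blast+
  also have "\<dots> \<in> \<U>"
    using J V cl by (intro filter_on_Int_finite[OF f J(1)] cylinder_in_maximal_stable_filter[OF \<U>]) blast+
  finally show ?thesis .
qed

text \<open>The localisation step: on \<open>A k\<close>, a point of the glued box agrees with a point of \<open>\<Pi> i. U k i\<close>.\<close>

lemma concat_sets_glued_boxes_subset:
  assumes A: "meas_partition M A" and U: "\<And>k i. i \<in> I \<Longrightarrow> U k i \<subseteq> S i"
    and J: "\<And>k i. i \<in> I \<Longrightarrow> i \<notin> J k \<Longrightarrow> U k i = S i" and V: "\<And>i. i \<in> I \<Longrightarrow> V i \<subseteq> S i"
  shows "concat_sets M Eprod A (\<lambda>k. box (J k) (\<lambda>i. glue_sets M (E i) (A k) (U k i) (V i)))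
      \<subseteq> concat_sets M Eprod A (\<lambda>k. \<Pi>\<^sub>E i\<in>I. U k i)"
proof (rule concat_sets_subset_if_local[OF concat_module_Eprod A])
  have Ak: "A k \<in> sets M" for k using A by (rule meas_partition_sets)
  have UVc: "U k i \<subseteq> mcarr (E i)" "V i \<subseteq> mcarr (E i)" if "i \<in> I" for k i
    using U V space_subset_carrier that by blast+
  have G: "glue_sets M (E i) (A k) (U k i) (V i) \<subseteq> S i" if "i \<in> I" for k i
    unfolding glue_sets_def using U V that
    by (intro concat_sets_subset[OF stable_set_space[OF that] meas_partition_partition2[OF Ak]]) auto
  show "box (J k) (\<lambda>i. glue_sets M (E i) (A k) (U k i) (V i)) \<subseteq> mcarr Eprod" for k
  proof -
    have "box (J k) (\<lambda>i. glue_sets M (E i) (A k) (U k i) (V i)) \<subseteq> Sprod" using G by (intro box_subset) blast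
    then show ?thesis using Sprod_subset_carrier by auto
  qed
  show "(\<Pi>\<^sub>E i\<in>I. U k i) \<subseteq> mcarr Eprod" for k using UVc(1) by (simp add: PiE_mono)
  fix k h assume h: "h \<in> box (J k) (\<lambda>i. glue_sets M (E i) (A k) (U k i) (V i))"
  then have hS: "h \<in> Sprod" and hJ: "\<And>i. i \<in> J k \<Longrightarrow> i \<in> I \<Longrightarrow> h i \<in> glue_sets M (E i) (A k) (U k i) (V i)"
    using mem_box[of "J k", OF G] by auto
  have "\<exists>c\<in>U k i. msmul (E i) (indicator (A k)) c = msmul (E i) (indicator (A k)) (h i)" if i: "i \<in> I" for i
  proof (cases "i \<in> J k")
    case True
    then obtain u where "u \<in> U k i" "msmul (E i) (indicator (A k)) (h i) = msmul (E i) (indicator (A k)) u"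
      using glue_sets_obtain[OF concat_module[OF i] Ak hJ[OF True i] UVc[OF i]] by blast
    then show ?thesis by metis
  next
    case False
    then show ?thesis using J[OF i False] hS i by auto
  qed
  then show "\<exists>z\<in>\<Pi>\<^sub>E i\<in>I. U k i. msmul Eprod (indicator (A k)) z = msmul Eprod (indicator (A k)) h"
    using hS Sprod_subset_carrier by (intro prod_module_local_witness) auto
qed

lemma glue_sets_base_nhd:
  assumes i: "i \<in> I" and X: "X \<in> sets M" and U: "U \<in> B i" "u \<in> U" and V: "V \<in> B i" "v \<in> V"
    and loc: "msmul (E i) (indicator X) u = msmul (E i) (indicator X) v"
  shows "glue_sets M (E i) X U V \<in> B i" "v \<in> glue_sets M (E i) X U V"
proof -
  show "glue_sets M (E i) X U V \<in> B i"
    unfolding glue_sets_def using U V by (intro base_concat_sets[OF i meas_partition_partition2[OF X]]) auto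
  have "u \<in> mcarr (E i)" "v \<in> mcarr (E i)"
    using U V base_subset[OF i] space_subset_carrier[OF i] by blast+
  then show "v \<in> glue_sets M (E i) X U V"
    using mem_glue_sets_if_local[OF concat_module[OF i] X U(2) V(2)] loc by blast
qed

lemma prod_base_in_maximal_stable_filter:
  assumes \<U>: "maximal_stable_filter M Eprod Sprod \<U>"
    and cl: "\<And>i. i \<in> I \<Longrightarrow> cluster_point (openin (T i)) (proj_filter \<U> i) (x i)"
    and W: "W \<in> prod_base M I E S B" and x: "x \<in> W"
  shows "W \<in> \<U>"
proof -
  obtain A U where W_eq: "W = concat_sets M Eprod A (\<lambda>k. \<Pi>\<^sub>E i\<in>I. U k i)" and A: "meas_partition M A"
    and fin: "\<And>k. finite {i \<in> I. U k i \<noteq> S i}" and UB: "\<And>k i. i \<in> I \<Longrightarrow> U k i \<in> B i \<or> U k i = S i"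
    using W unfolding prod_base_def by blast
  have Ak: "A k \<in> sets M" for k using A by (rule meas_partition_sets)
  have US: "U k i \<subseteq> S i" if "i \<in> I" for k i using UB[OF that] base_subset[OF that] by blast
  have W_sub: "W \<subseteq> Sprod"
    unfolding W_eq using US by (intro concat_sets_subset[OF stable_set_Sprod A]) (simp add: PiE_mono)
  obtain y where xy: "x = concat M Eprod A y" and y: "\<And>k. y k \<in> (\<Pi>\<^sub>E i\<in>I. U k i)"
    using x unfolding W_eq by (elim concat_setsE) blast
  have yS: "y k \<in> Sprod" for k using y[of k] US by (blast dest: PiE_mono[rotated])
  have xS: "x \<in> Sprod" using x W_sub by blast
  have yc: "y k i \<in> mcarr (E i)" if "i \<in> I" for k i
    using yS that space_subset_carrier by blast
  have loc: "msmul (E i) (indicator (A k)) (y k i) = msmul (E i) (indicator (A k)) (x i)" if i: "i \<in> I" for i k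
  proof -
    have "y k \<in> (\<Pi>\<^sub>E i\<in>I. mcarr (E i))" for k using yS Sprod_subset_carrier by blast
    then have "x i = concat M (E i) A (\<lambda>k. y k i)"
      unfolding xy using i by (subst concat_prod_module[where I=I and E=E, OF concat_module A]) auto
    then show ?thesis using smul_indicator_concat[OF concat_module[OF i] A, of "\<lambda>k. y k i"] yc[OF i] by simp
  qed
  have "\<exists>V. V \<in> B i \<and> x i \<in> V" if "i \<in> I" for i
    using base_cover[OF that, of "x i"] xS that by blast
  then obtain V where "\<forall>i\<in>I. V i \<in> B i \<and> x i \<in> V i" by (metis bchoice)
  then have V: "\<And>i. i \<in> I \<Longrightarrow> V i \<in> B i \<and> x i \<in> V i" by blast
  define J where "J k = {i \<in> I. U k i \<noteq> S i}" for k
  \<comment> \<open>on \<open>A k\<close> the set \<open>G k i\<close> is \<open>U k i\<close>, elsewhere it is the neighbourhood \<open>V i\<close> of \<open>x i\<close>\<close>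
  define G where "G k i = glue_sets M (E i) (A k) (U k i) (V i)" for k i
  have "G k i \<in> B i \<and> x i \<in> G k i" if "i \<in> J k" for k i
  proof -
    have i: "i \<in> I" and UB': "U k i \<in> B i" using that UB unfolding J_def by auto
    have "y k i \<in> U k i" using y i by blast
    then show ?thesis
      unfolding G_def using glue_sets_base_nhd[OF i Ak UB' _ _ _ loc[OF i]] V[OF i] by blast
  qed
  then have "box (J k) (G k) \<in> \<U>" for k
    using fin by (intro box_in_maximal_stable_filter[OF \<U> cl]) (auto simp: J_def)
  then have "concat_sets M Eprod A (\<lambda>k. box (J k) (G k)) \<in> \<U>"
    using \<U> stable_set_Sprod A unfolding maximal_stable_filter_def by (blast intro: stable_filter_concat_sets)
  moreover have "concat_sets M Eprod A (\<lambda>k. box (J k) (G k)) \<subseteq> W"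
    unfolding W_eq G_def using US V base_subset
    by (intro concat_sets_glued_boxes_subset[OF A]) (auto simp: J_def)
  ultimately show "W \<in> \<U>"
    using \<U> W_sub filter_onD(5) stable_filter_filter_on unfolding maximal_stable_filter_def by metis
qed

lemma stable_compact_product:
  assumes compact: "\<And>i. i \<in> I \<Longrightarrow> stable_compact M (E i) (S i) (openin (T i))"
  shows "stable_compact M Eprod Sprod (prod_open M I E S B)"
  unfolding stable_compact_def
proof (intro allI impI)
  fix \<F> assume \<F>: "stable_filter M Eprod Sprod \<F>"
  obtain \<U> where \<U>: "maximal_stable_filter M Eprod Sprod \<U>" and \<F>\<U>: "\<F> \<subseteq> \<U>"
    using maximal_stable_filter_exists[OF concat_module_Eprod stable_set_Sprod \<F>] by blast
  have U: "stable_filter M Eprod Sprod \<U>" using \<U> unfolding maximal_stable_filter_def by blast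
  have "\<forall>i\<in>I. \<exists>a\<in>S i. cluster_point (openin (T i)) (proj_filter \<U> i) a"
    using compact stable_filter_proj_filter[OF U] unfolding stable_compact_def by blast
  then obtain a where "\<forall>i\<in>I. a i \<in> S i \<and> cluster_point (openin (T i)) (proj_filter \<U> i) (a i)"
    by (metis bchoice)
  then have a: "\<And>i. i \<in> I \<Longrightarrow> a i \<in> S i \<and> cluster_point (openin (T i)) (proj_filter \<U> i) (a i)"
    by blast
  have x: "restrict a I \<in> Sprod" using a by simp
  have cl: "cluster_point (openin (T i)) (proj_filter \<U> i) (restrict a I i)" if "i \<in> I" for i
    using a that by simp
  have "cluster_point (prod_open M I E S B) \<F> (restrict a I)"
    unfolding cluster_point_def
  proof (intro allI impI ballI)
    fix W' F assume W': "prod_open M I E S B W' \<and> restrict a I \<in> W'" and F: "F \<in> \<F>"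
    then obtain W where W: "W \<in> prod_base M I E S B" "restrict a I \<in> W" "W \<subseteq> W'"
      unfolding prod_open_def by blast
    have "W \<in> \<U>" using prod_base_in_maximal_stable_filter[OF \<U> cl W(1,2)] .
    then have "W \<inter> F \<in> \<U>" using F \<F>\<U> filter_onD(4)[OF stable_filter_filter_on[OF U]] by blast
    then have "W \<inter> F \<noteq> {}" using filter_onD(2)[OF stable_filter_filter_on[OF U]] by auto
    then show "W' \<inter> F \<noteq> {}" using W(3) by blast
  qed
  then show "\<exists>x\<in>Sprod. cluster_point (prod_open M I E S B) \<F> x" using x by blast
qed

end

theorem mainTheorem9:
  fixes M :: "'w measure" and I :: "'i set" and E :: "'i \<Rightarrow> ('w, 'e) L0module"
    and S :: "'i \<Rightarrow> 'e set" and T :: "'i \<Rightarrow> 'e topology" and B :: "'i \<Rightarrow> 'e set set"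
  assumes "prob_space M"
    and "I \<noteq> {}"
    and "\<forall>i\<in>I. stable_module M (E i)"
    and "\<forall>i\<in>I. stable_top_space M (E i) (S i) (T i)"
    and "\<forall>i\<in>I. stable_base M (E i) (T i) (B i)"
  shows "stable_compact M (prod_module I E) (\<Pi>\<^sub>E i\<in>I. S i) (prod_open M I E S B)
     \<longleftrightarrow> (\<forall>i\<in>I. stable_compact M (E i) (S i) (openin (T i)))"
proof -
  interpret stable_product M I E S T B
    using assms(3-5) stable_module_imp_concat_module unfolding stable_top_space_def
    by unfold_locales blast+
  show ?thesis using stable_compact_factor stable_compact_product by blast
qed

end
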